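(* Let $d\ge 2$, $n\ge 1$, and let $h_1,\dots,h_m$ be traceless Hermitian operators on $(\mathbb{C}^d)^{\otimes n}$, each supported on 2 qudits and normalized as $\|h_i\|_\infty=1$. For every $U\in \mathrm{SU}(d^n)$, the circuit cost of $U$ with respect to $h_1,\dots,h_m$ satisfies $$\mathrm{Cost}(U)\ \ge\ \frac{1}{8}\,\mathrm{CiS}[U].$$
   Context: Let $V=\mathbb{Z}_d\times\mathbb{Z}_d$. For $a=(s,t)\in V$ let $P_a=X^sZ^t$, where $X|j\rangle=|j+1 \bmod d\rangle$ and $Z|j\rangle=e^{2\pi i j/d}|j\rangle$. For $\vec a\in V^n$, $P_{\vec a}=\bigotimes_{i=1}^n P_{a_i}$, and $|\vec a|$ is the number of indices $i$ with $a_i\neq(0,0)$. For operators $A,B$ on $(\mathbb{C}^d)^{\otimes n}$, $\langle A,B\rangle=d^{-n}\mathrm{Tr}(A^\dagger B)$ and $\|A\|_2=\sqrt{\langle A,A\rangle}$. For $O$ with $\|O\|_2=1$, $P_O[\vec a]=d^{-2n}|\mathrm{Tr}(OP_{\vec a})|^2$ (a probability distribution on $V^n$), and the total influence is $I[O]=\sum_{\vec a\in V^n}|\vec a|\,P_O[\vec a]$. The circuit sensitivity of a unitary $U$ is $\mathrm{CiS}[U]=\max_{O:\|O\|_2=1}|I[UOU^\dagger]-I[O]|$. The circuit cost of $U$ with respect to $h_1,\dots,h_m$ is $\mathrm{Cost}(U)=\inf\int_0^1\sum_{j=1}^m|r_j(s)|\,ds$, the infimum over all continuous $r_j:[0,1]\to\mathbb{R}$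 such that $U=\mathcal{P}\exp(-i\int_0^1 H(s)ds)$ with $H(s)=\sum_j r_j(s)h_j$, where $\mathcal{P}$ is path ordering (the infimum of the empty set is $+\infty$). *)

theory Defs
  imports "HOL-Analysis.Analysis" "Jordan_Normal_Form.Determinant"
begin

text \<open>Operators on (C^d)^{\<otimes>n} are complex matrices of dimension d^n.
  A basis index k < d^n encodes the computational basis string whose i-th digit
  (qudit i, 0 \<le> i < n) is qdigit d k i.\<close>

definition qdigit :: "nat \<Rightarrow> nat \<Rightarrow> nat \<Rightarrow> nat" where
  "qdigit d k i = (k div d ^ i) mod d"

definition adj :: "complex mat \<Rightarrow> complex mat" where
  "adj A = mat (dim_col A) (dim_row A) (\<lambda>(i,j). cnj (A $$ (j,i)))"

definition mtrace :: "complex mat \<Rightarrow> complex" where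
  "mtrace A = (\<Sum>i<dim_row A. A $$ (i,i))"

definition hermitian_op :: "complex mat \<Rightarrow> bool" where
  "hermitian_op A \<longleftrightarrow> adj A = A"

definition cvec_norm :: "complex vec \<Rightarrow> real" where
  "cvec_norm v = sqrt (\<Sum>i<dim_vec v. (cmod (v $ i))\<^sup>2)"

definition op_norm :: "complex mat \<Rightarrow> real" where
  "op_norm A = Sup {cvec_norm (A *\<^sub>v v) | v. v \<in> carrier_vec (dim_col A) \<and> cvec_norm v \<le> 1}"

definition hs_inner :: "nat \<Rightarrow> nat \<Rightarrow> complex mat \<Rightarrow> complex mat \<Rightarrow> complex" where
  "hs_inner d n A B = mtrace (adj A * B) / of_nat (d ^ n)"

definition hs_norm :: "nat \<Rightarrow> nat \<Rightarrow> complex mat \<Rightarrow> real" where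
  "hs_norm d n A = sqrt (Re (hs_inner d n A A))"

definition SU :: "nat \<Rightarrow> complex mat set" where
  "SU N = {U. U \<in> carrier_mat N N \<and> U * adj U = 1\<^sub>m N \<and> det U = 1}"

text \<open>Support on at most two qudits: h = g \<otimes> I for some operator g acting on the
  qudits in a set S with |S| \<le> 2.\<close>
definition two_qudit_supported :: "nat \<Rightarrow> nat \<Rightarrow> complex mat \<Rightarrow> bool" where
  "two_qudit_supported d n h \<longleftrightarrow>
     (\<exists>S g. S \<subseteq> {..<n} \<and> card S \<le> 2 \<and>
        (\<forall>k<d^n. \<forall>l<d^n.
           h $$ (k,l) = (if (\<forall>i<n. i \<notin> S \<longrightarrow> qdigit d k i = qdigit d l i)
                         then g (\<lambda>i. if i \<in> S then qdigit d k i else 0)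
                                (\<lambda>i. if i \<in> S then qdigit d l i else 0)
                         else 0)))"

text \<open>V^n = (Z_d x Z_d)^n, as functions nat \<Rightarrow> nat \<times> nat vanishing outside {..<n}.\<close>
definition Vn :: "nat \<Rightarrow> nat \<Rightarrow> (nat \<Rightarrow> nat \<times> nat) set" where
  "Vn d n = {a. (\<forall>i<n. fst (a i) < d \<and> snd (a i) < d) \<and> (\<forall>i\<ge>n. a i = (0,0))}"

definition pweight :: "nat \<Rightarrow> (nat \<Rightarrow> nat \<times> nat) \<Rightarrow> nat" where
  "pweight n a = card {i. i < n \<and> a i \<noteq> (0,0)}"

text \<open>Matrix entry \<langle>r| X^s Z^t |c\<rangle> on one qudit: X^s Z^t |c\<rangle> = \<omega>^{tc} |c+s mod d\<rangle>.\<close>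
definition pauli1_entry :: "nat \<Rightarrow> nat \<times> nat \<Rightarrow> nat \<Rightarrow> nat \<Rightarrow> complex" where
  "pauli1_entry d a r c =
     (if r = (c + fst a) mod d
      then exp (2 * pi * \<i> * of_nat (snd a * c) / of_nat d) else 0)"

definition pauli :: "nat \<Rightarrow> nat \<Rightarrow> (nat \<Rightarrow> nat \<times> nat) \<Rightarrow> complex mat" where
  "pauli d n a = mat (d^n) (d^n)
     (\<lambda>(k,l). \<Prod>i<n. pauli1_entry d (a i) (qdigit d k i) (qdigit d l i))"

definition pauli_prob :: "nat \<Rightarrow> nat \<Rightarrow> complex mat \<Rightarrow> (nat \<Rightarrow> nat \<times> nat) \<Rightarrow> real" where
  "pauli_prob d n A a = (cmod (mtrace (A * pauli d n a)))\<^sup>2 / real d ^ (2*n)"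

definition influence :: "nat \<Rightarrow> nat \<Rightarrow> complex mat \<Rightarrow> real" where
  "influence d n A = (\<Sum>a\<in>Vn d n. real (pweight n a) * pauli_prob d n A a)"

definition circuit_sensitivity :: "nat \<Rightarrow> nat \<Rightarrow> complex mat \<Rightarrow> real" where
  "circuit_sensitivity d n U =
     Sup {\<bar>influence d n (U * A * adj U) - influence d n A\<bar> | A.
            A \<in> carrier_mat (d^n) (d^n) \<and> hs_norm d n A = 1}"

text \<open>U = P exp(-i \<integral>_0^1 H(s) ds): U = W(1), where W solves W' = -i H W, W(0) = I
  on [0,1] (entrywise derivatives).\<close>
definition path_ordered_exp :: "nat \<Rightarrow> (real \<Rightarrow> complex mat) \<Rightarrow> complex mat \<Rightarrow> bool" where
  "path_ordered_exp N H U \<longleftrightarrow>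
     (\<exists>W :: real \<Rightarrow> complex mat.
        (\<forall>s\<in>{0..1}. W s \<in> carrier_mat N N) \<and> W 0 = 1\<^sub>m N \<and> W 1 = U \<and>
        (\<forall>s\<in>{0..1}. \<forall>k<N. \<forall>l<N.
           ((\<lambda>t. W t $$ (k,l)) has_vector_derivative (- \<i> * (H s * W s) $$ (k,l)))
             (at s within {0..1})))"

definition circuit_cost :: "nat \<Rightarrow> nat \<Rightarrow> (nat \<Rightarrow> complex mat) \<Rightarrow> complex mat \<Rightarrow> ereal" where
  "circuit_cost N m h U =
     Inf (ereal ` {integral {0..1} (\<lambda>s. \<Sum>j<m. \<bar>r j s\<bar>) | r :: nat \<Rightarrow> real \<Rightarrow> real.
            (\<forall>j<m. continuous_on {0..1} (r j)) \<and>
            path_ordered_exp N (\<lambda>s. mat N N (\<lambda>(k,l). \<Sum>j<m. complex_of_real (r j s) * h j $$ (k,l))) U})"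

end

(*
  Along an admissible control path W' = -i H W with H = sum_j r_j h_j, the observable
  Q = W A W^* evolves by Q' = -i[H,Q] and keeps its Frobenius norm.  With c_a(X) = Tr(X P_a),
  the influence is (1/N^2) sum_i psi_i(Q,Q), where psi_i(X,Y) sums conj(c_a X) c_a Y over the
  Pauli strings a that are nontrivial at qudit i.  Pauli orthogonality gives
  psi_i(X,Y) = N <X,Y> - d^(n-1) <X, T_i Y> with T_i Y = I_i (x) tr_i Y, and T_i commutes with
  every operator acting trivially on qudit i, so Re psi_i(Q, -i[h,Q]) = 0 for such an h.
  Each h_j therefore only contributes at the two qudits it touches, where Cauchy-Schwarz and
  ||[h_j,Q]||_F <= 2 ||Q||_F bound |psi_i| by 2 N ||Q||_F^2 = 2 N^2.  Hence the influence
  changes at rate at most 8 sum_j |r_j|, and integrating over [0,1] gives CiS[U] <= 8 Cost(U).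
*)

theory Submission
  imports Defs
begin

section \<open>Base-d digits\<close>

definition from_digits :: "nat \<Rightarrow> nat \<Rightarrow> (nat \<Rightarrow> nat) \<Rightarrow> nat" where
  "from_digits d n f = (\<Sum>j<n. f j * d ^ j)"

lemma from_digits_cong: "(\<And>j. j < n \<Longrightarrow> f j = g j) \<Longrightarrow> from_digits d n f = from_digits d n g"
  unfolding from_digits_def by (rule sum.cong) auto

lemma from_digits_Suc: "from_digits d (Suc n) f = from_digits d n f + f n * d ^ n"
  unfolding from_digits_def by simp

lemma from_digits_less:
  assumes "\<And>j. j < n \<Longrightarrow> f j < d"
  shows "from_digits d n f < d ^ n"
  using assms
proof (induction n)
  case 0
  then show ?case by (simp add: from_digits_def)
next
  case (Suc n)
  have low: "from_digits d n f < d ^ n"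
    by (rule Suc.IH) (simp add: Suc.prems)
  have top: "f n + 1 \<le> d"
    using Suc.prems[of n] by simp
  have "from_digits d n f + f n * d ^ n < (f n + 1) * d ^ n"
    using low by simp
  also have "\<dots> \<le> d ^ Suc n"
    using mult_le_mono1[OF top, of "d ^ n"] by simp
  finally show ?case
    by (simp add: from_digits_Suc)
qed

lemma qdigit_less: "0 < d \<Longrightarrow> qdigit d k j < d"
  unfolding qdigit_def by simp

lemma qdigit_add_mult_power:
  assumes "0 < d" "j < n"
  shows "qdigit d (x + y * d ^ n) j = qdigit d x j"
proof -
  obtain q where "n = Suc (j + q)"
    using assms(2) less_iff_Suc_add by auto
  then have high: "y * d ^ n = (y * d ^ q * d) * d ^ j"
    by (simp add: power_add mult_ac)
  have "(x + y * d ^ n) div d ^ j = x div d ^ j + y * d ^ q * d"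
    unfolding high using assms(1) by simp
  then show ?thesis
    unfolding qdigit_def by simp
qed

lemma qdigit_from_digits:
  assumes "0 < d" "\<And>j. j < n \<Longrightarrow> f j < d" "j < n"
  shows "qdigit d (from_digits d n f) j = f j"
  using assms(2,3)
proof (induction n)
  case 0
  then show ?case by simp
next
  case (Suc n)
  show ?case
  proof (cases "j < n")
    case True
    then show ?thesis
      using Suc qdigit_add_mult_power[OF assms(1) True] by (simp add: from_digits_Suc)
  next
    case False
    then have "j = n" and "from_digits d n f < d ^ n"
      using Suc by (auto intro: from_digits_less)
    then show ?thesis
      using assms(1) Suc.prems(1)[of n] unfolding qdigit_def by (simp add: from_digits_Suc)
  qed
qed

lemma from_digits_qdigit: "from_digits d n (qdigit d k) = k mod d ^ n"
proof (induction n)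
  case 0
  then show ?case by (simp add: from_digits_def)
next
  case (Suc n)
  have "k mod (d ^ n * d) = d ^ n * (k div d ^ n mod d) + k mod d ^ n"
    by (rule mod_mult2_eq)
  then show ?case
    using Suc by (simp add: from_digits_Suc qdigit_def mult.commute)
qed

lemma qdigits_inject:
  assumes "k < d ^ n" "k' < d ^ n" "\<And>j. j < n \<Longrightarrow> qdigit d k j = qdigit d k' j"
  shows "k = k'"
proof -
  have "from_digits d n (qdigit d k) = from_digits d n (qdigit d k')"
    using assms(3) by (rule from_digits_cong)
  then show ?thesis
    using assms(1,2) by (simp add: from_digits_qdigit)
qed

definition set_digit :: "nat \<Rightarrow> nat \<Rightarrow> nat \<Rightarrow> nat \<Rightarrow> nat \<Rightarrow> nat" where
  "set_digit d n k i t = from_digits d n (\<lambda>j. if j = i then t else qdigit d k j)"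

lemma set_digit_less: "0 < d \<Longrightarrow> t < d \<Longrightarrow> set_digit d n k i t < d ^ n"
  unfolding set_digit_def by (rule from_digits_less) (auto simp: qdigit_less)

lemma qdigit_set_digit:
  "0 < d \<Longrightarrow> t < d \<Longrightarrow> j < n \<Longrightarrow>
    qdigit d (set_digit d n k i t) j = (if j = i then t else qdigit d k j)"
  unfolding set_digit_def by (rule qdigit_from_digits) (auto simp: qdigit_less)

lemma eq_set_digit_iff:
  assumes "0 < d" "t < d" "i < n" "m < d ^ n"
  shows "m = set_digit d n k i t \<longleftrightarrow>
    qdigit d m i = t \<and> (\<forall>j<n. j \<noteq> i \<longrightarrow> qdigit d m j = qdigit d k j)"
proof
  assume "m = set_digit d n k i t"
  then show "qdigit d m i = t \<and> (\<forall>j<n. j \<noteq> i \<longrightarrow> qdigit d m j = qdigit d k j)"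
    using assms by (simp add: qdigit_set_digit)
next
  assume digits: "qdigit d m i = t \<and> (\<forall>j<n. j \<noteq> i \<longrightarrow> qdigit d m j = qdigit d k j)"
  show "m = set_digit d n k i t"
  proof (rule qdigits_inject[of _ d n])
    fix j assume "j < n"
    then show "qdigit d m j = qdigit d (set_digit d n k i t) j"
      using assms digits by (simp add: qdigit_set_digit)
  qed (use assms set_digit_less in auto)
qed

lemma set_digit_qdigit: "0 < d \<Longrightarrow> k < d ^ n \<Longrightarrow> set_digit d n k i (qdigit d k i) = k"
  by (rule qdigits_inject[of _ d n]) (auto simp: set_digit_less qdigit_set_digit qdigit_less)

lemma set_digit_set_digit:
  "0 < d \<Longrightarrow> i < n \<Longrightarrow> t < d \<Longrightarrow> c < d \<Longrightarrow>
    set_digit d n (set_digit d n k i t) i c = set_digit d n k i c"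
  by (rule qdigits_inject[of _ d n]) (auto simp: set_digit_less qdigit_set_digit qdigit_less)

section \<open>Pauli orthogonality and the partial trace\<close>

lemma Vn_eq_image_PiE:
  "Vn d n = (\<lambda>g i. if i < n then g i else (0,0)) ` PiE {..<n} (\<lambda>_. {..<d} \<times> {..<d})"
proof (intro equalityI subsetI)
  fix a assume "a \<in> Vn d n"
  then have "a = (\<lambda>i. if i < n then restrict a {..<n} i else (0,0))"
    and "restrict a {..<n} \<in> PiE {..<n} (\<lambda>_. {..<d} \<times> {..<d})"
    by (auto simp: Vn_def mem_Times_iff)
  then show "a \<in> (\<lambda>g i. if i < n then g i else (0,0)) ` PiE {..<n} (\<lambda>_. {..<d} \<times> {..<d})"
    by blast
qed (auto simp: Vn_def PiE_def Pi_def mem_Times_iff)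

lemma inj_on_extend_PiE:
  "inj_on (\<lambda>g i. if i < n then g i else (0,0)) (PiE {..<n} B)"
proof (rule inj_onI, rule PiE_ext)
  fix f g i
  assume "(\<lambda>i. if i < n then f i else (0,0)) = (\<lambda>i. if i < n then g i else (0,0))" "i \<in> {..<n}"
  then show "f i = g i"
    by (metis (mono_tags) lessThan_iff)
qed

lemma finite_Vn: "finite (Vn d n)"
  unfolding Vn_eq_image_PiE by (intro finite_imageI finite_PiE) auto

lemma sum_Vn_prod:
  "(\<Sum>a\<in>Vn d n. \<Prod>j<n. F j (a j)) = (\<Prod>j<n. \<Sum>x\<in>{..<d} \<times> {..<d}. (F j x :: 'a :: comm_semiring_1))"
proof -
  have "(\<Prod>j<n. \<Sum>x\<in>{..<d} \<times> {..<d}. F j x) =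
      (\<Sum>g\<in>PiE {..<n} (\<lambda>_. {..<d} \<times> {..<d}). \<Prod>j<n. F j (g j))"
    by (rule prod_sum_PiE) auto
  also have "\<dots> = (\<Sum>a\<in>Vn d n. \<Prod>j<n. F j (a j))"
    unfolding Vn_eq_image_PiE sum.reindex[OF inj_on_extend_PiE]
    by (intro sum.cong refl prod.cong) auto
  finally show ?thesis ..
qed

definition phase :: "nat \<Rightarrow> nat \<Rightarrow> complex" where
  "phase d x = exp (2 * pi * \<i> * of_nat x / of_nat d)"

lemma pauli1_entry_eq:
  "pauli1_entry d (s,t) r c = (if r = (c + s) mod d then phase d (t * c) else 0)"
  unfolding pauli1_entry_def phase_def by simp

lemma pauli1_entry_zero: "c < d \<Longrightarrow> pauli1_entry d (0,0) r c = (if r = c then 1 else 0)"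
  unfolding pauli1_entry_def by simp

lemma cnj_phase_mult_phase: "cnj (phase d x) * phase d x = 1"
proof -
  have "cnj (phase d x) * phase d x =
      exp (cnj (2 * pi * \<i> * of_nat x / of_nat d) + 2 * pi * \<i> * of_nat x / of_nat d)"
    unfolding phase_def by (simp only: exp_cnj exp_add)
  then show ?thesis by simp
qed

lemma phase_mult: "phase d (t * x) = phase d x ^ t"
  unfolding phase_def by (simp add: exp_of_nat_mult[symmetric] mult_ac)

lemma sum_cnj_phase_mult_phase:
  assumes "c < d" "c' < d"
  shows "(\<Sum>t<d. cnj (phase d (t * c)) * phase d (t * c')) = (if c = c' then of_nat d else 0)"
proof -
  define z where "z = cnj (phase d c) * phase d c'"
  have terms: "cnj (phase d (t * c)) * phase d (t * c') = z ^ t" for t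
    unfolding z_def phase_mult by (simp add: power_mult_distrib)
  have unit_root: "phase d x ^ d = 1" for x
    unfolding phase_def using assms complex_root_unity[of d x] by simp
  have "z ^ d = cnj (phase d c ^ d) * phase d c' ^ d"
    unfolding z_def by (simp add: power_mult_distrib)
  then have root: "z ^ d = 1"
    by (simp only: unit_root) simp
  have "z = 1 \<longleftrightarrow> c = c'"
  proof
    assume "z = 1"
    then have "phase d c' = phase d c"
      using cnj_phase_mult_phase[of d c] unfolding z_def
      by (metis mult.assoc mult.commute mult_1 mult_1_right)
    then have "c' mod d = c mod d"
      using assms complex_root_unity_eq[of d c' c] unfolding phase_def by simp
    then show "c = c'"
      using assms by simp
  qed (simp add: z_def cnj_phase_mult_phase)
  then show ?thesis
    unfolding terms using root by (simp add: sum_gp_strict)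
qed

lemma sum_rotate_mod:
  fixes c d :: nat
  assumes "c < d"
  shows "(\<Sum>s<d. f ((c + s) mod d)) = (\<Sum>s<d. f s)"
proof (rule sum.reindex_bij_witness[of _ "\<lambda>s. (s + d - c) mod d" "\<lambda>s. (c + s) mod d"])
  fix s assume "s \<in> {..<d}"
  then show "(c + (s + d - c) mod d) mod d = s" "(s + d - c) mod d \<in> {..<d}"
    using assms by (auto simp: mod_add_right_eq)
next
  fix s assume "s \<in> {..<d}"
  then show "((c + s) mod d + d - c) mod d = s" "(c + s) mod d \<in> {..<d}"
    using assms by (auto simp: mod_if)
qed simp

lemma pauli1_orthogonality:
  assumes "r < d" "c < d" "r' < d" "c' < d"
  shows "(\<Sum>x\<in>{..<d} \<times> {..<d}. cnj (pauli1_entry d x r c) * pauli1_entry d x r' c') =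
    (if c = c' \<and> r = r' then of_nat d else 0)"
proof -
  have "(\<Sum>x\<in>{..<d} \<times> {..<d}. cnj (pauli1_entry d x r c) * pauli1_entry d x r' c') =
      (\<Sum>s<d. \<Sum>t<d. cnj (pauli1_entry d (s,t) r c) * pauli1_entry d (s,t) r' c')"
    by (simp add: sum.cartesian_product)
  also have "\<dots> = (\<Sum>s<d. if r = (c + s) mod d \<and> r' = (c' + s) mod d
               then \<Sum>t<d. cnj (phase d (t * c)) * phase d (t * c') else 0)"
    by (rule sum.cong) (auto simp: pauli1_entry_eq)
  also have "\<dots> = (if c = c' then \<Sum>s<d. if (c + s) mod d = r \<and> r = r' then of_nat d else 0 else 0)"
    unfolding sum_cnj_phase_mult_phase[OF assms(2,4)] by (auto intro!: sum.cong)
  also have "\<dots> = (if c = c' then \<Sum>s<d. if s = r \<and> r = r' then of_nat d else 0 else 0)"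
    by (simp only: sum_rotate_mod[OF assms(2), of "\<lambda>s. if s = r \<and> r = r' then of_nat d else 0"])
  also have "\<dots> = (if c = c' \<and> r = r' then of_nat d else 0)"
    using assms by simp
  finally show ?thesis .
qed

abbreviation entries :: "nat \<Rightarrow> (nat \<times> nat) set" where
  "entries N \<equiv> {..<N} \<times> {..<N}"

definition frob_inner :: "nat \<Rightarrow> complex mat \<Rightarrow> complex mat \<Rightarrow> complex" where
  "frob_inner N X Y = (\<Sum>p\<in>entries N. cnj (X $$ p) * Y $$ p)"

lemma frob_inner_commute: "frob_inner N Y X = cnj (frob_inner N X Y)"
  unfolding frob_inner_def by (simp add: mult.commute)

lemma cnj_mult_self: "cnj z * z = complex_of_real ((cmod z)\<^sup>2)"
  by (metis complex_norm_square mult.commute)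

definition pauli_coeff :: "nat \<Rightarrow> nat \<Rightarrow> complex mat \<Rightarrow> (nat \<Rightarrow> nat \<times> nat) \<Rightarrow> complex" where
  "pauli_coeff d n X a = mtrace (X * pauli d n a)"

lemma pauli_coeff_eq:
  assumes "X \<in> carrier_mat (d^n) (d^n)"
  shows "pauli_coeff d n X a = (\<Sum>p\<in>entries (d^n). X $$ p *
    (\<Prod>j<n. pauli1_entry d (a j) (qdigit d (snd p) j) (qdigit d (fst p) j)))"
  using assms
  by (simp add: pauli_coeff_def mtrace_def pauli_def scalar_prod_def atLeast0LessThan)
    (simp add: sum.cartesian_product case_prod_beta)

lemma sum_weighted_cnj_mult_sum:
  fixes w :: "'a \<Rightarrow> complex"
  shows "(\<Sum>a\<in>A. w a * (cnj (\<Sum>p\<in>P. x p * \<phi> a p) * (\<Sum>q\<in>P. y q * \<phi> a q))) =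
    (\<Sum>p\<in>P. \<Sum>q\<in>P. cnj (x p) * y q * (\<Sum>a\<in>A. w a * (cnj (\<phi> a p) * \<phi> a q)))"
proof -
  have "(\<Sum>a\<in>A. w a * (cnj (\<Sum>p\<in>P. x p * \<phi> a p) * (\<Sum>q\<in>P. y q * \<phi> a q))) =
      (\<Sum>a\<in>A. \<Sum>p\<in>P. \<Sum>q\<in>P. cnj (x p) * y q * (w a * (cnj (\<phi> a p) * \<phi> a q)))"
    by (simp add: sum_product sum_distrib_left mult_ac)
  also have "\<dots> = (\<Sum>p\<in>P. \<Sum>q\<in>P. \<Sum>a\<in>A. cnj (x p) * y q * (w a * (cnj (\<phi> a p) * \<phi> a q)))"
    by (subst sum.swap) (simp only: sum.swap[of _ A])
  finally show ?thesis
    by (simp add: sum_distrib_left)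
qed

text \<open>The factorised form of \<open>\<Sum>\<^sub>a (\<Prod>\<^sub>j w j (a j)) cnj (P\<^sub>a $$ (l,k)) P\<^sub>a $$ (l',k')\<close>
  for \<open>p = (k,l)\<close>, \<open>q = (k',l')\<close>.\<close>

definition pauli_kernel ::
  "nat \<Rightarrow> nat \<Rightarrow> (nat \<Rightarrow> nat \<times> nat \<Rightarrow> complex) \<Rightarrow> nat \<times> nat \<Rightarrow> nat \<times> nat \<Rightarrow> complex" where
  "pauli_kernel d n w p q = (\<Prod>j<n. \<Sum>x\<in>{..<d} \<times> {..<d}. w j x *
     (cnj (pauli1_entry d x (qdigit d (snd p) j) (qdigit d (fst p) j)) *
      pauli1_entry d x (qdigit d (snd q) j) (qdigit d (fst q) j)))"

lemma weighted_pauli_sum: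
  assumes "X \<in> carrier_mat (d^n) (d^n)" "Y \<in> carrier_mat (d^n) (d^n)"
  shows "(\<Sum>a\<in>Vn d n. (\<Prod>j<n. w j (a j)) * (cnj (pauli_coeff d n X a) * pauli_coeff d n Y a)) =
    (\<Sum>p\<in>entries (d^n). \<Sum>q\<in>entries (d^n). cnj (X $$ p) * Y $$ q * pauli_kernel d n w p q)"
  unfolding pauli_coeff_eq[OF assms(1)] pauli_coeff_eq[OF assms(2)] sum_weighted_cnj_mult_sum
  by (simp add: pauli_kernel_def sum_Vn_prod[symmetric] prod.distrib)

lemma prod_if_else_zero:
  "finite A \<Longrightarrow> (\<Prod>j\<in>A. if P j then f j else 0) = (if \<forall>j\<in>A. P j then \<Prod>j\<in>A. f j else (0::'a::comm_semiring_1))"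
  by (auto intro!: prod.cong prod_zero)

lemma pauli_kernel_one:
  assumes "0 < d" "p \<in> entries (d^n)" "q \<in> entries (d^n)"
  shows "pauli_kernel d n (\<lambda>_ _. 1) p q = (if p = q then of_nat (d^n) else 0)"
proof -
  have "pauli_kernel d n (\<lambda>_ _. 1) p q = (\<Prod>j<n.
      if qdigit d (fst p) j = qdigit d (fst q) j \<and> qdigit d (snd p) j = qdigit d (snd q) j
      then of_nat d else 0)"
    unfolding pauli_kernel_def using assms(1) by (simp add: pauli1_orthogonality qdigit_less)
  also have "\<dots> = (if p = q then of_nat (d^n) else 0)"
    using assms qdigits_inject[of "fst p" d n "fst q"] qdigits_inject[of "snd p" d n "snd q"]
    by (auto simp: prod_if_else_zero prod_eq_iff)
  finally show ?thesis .
qed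

theorem pauli_parseval:
  assumes "0 < d" "X \<in> carrier_mat (d^n) (d^n)" "Y \<in> carrier_mat (d^n) (d^n)"
  shows "(\<Sum>a\<in>Vn d n. cnj (pauli_coeff d n X a) * pauli_coeff d n Y a) =
    of_nat (d^n) * frob_inner (d^n) X Y"
proof -
  have "(\<Sum>a\<in>Vn d n. cnj (pauli_coeff d n X a) * pauli_coeff d n Y a) =
      (\<Sum>p\<in>entries (d^n). \<Sum>q\<in>entries (d^n). cnj (X $$ p) * Y $$ q * pauli_kernel d n (\<lambda>_ _. 1) p q)"
    using weighted_pauli_sum[OF assms(2,3), of "\<lambda>_ _. 1"] by simp
  also have "\<dots> = (\<Sum>p\<in>entries (d^n). cnj (X $$ p) * Y $$ p * of_nat (d^n))"
    using assms(1) by (intro sum.cong refl) (simp add: pauli_kernel_one if_distrib[of "\<lambda>c. _ * c"] cong: if_cong)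
  finally show ?thesis
    by (simp add: frob_inner_def sum_distrib_left mult_ac)
qed

text \<open>\<open>trace_out d n i Y\<close> is \<open>I\<^sub>i \<otimes> tr\<^sub>i Y\<close>: the partial trace over qudit \<open>i\<close>,
  tensored back with the identity on that qudit.\<close>

definition trace_out :: "nat \<Rightarrow> nat \<Rightarrow> nat \<Rightarrow> complex mat \<Rightarrow> complex mat" where
  "trace_out d n i Y = mat (d^n) (d^n) (\<lambda>(k,l). if qdigit d k i = qdigit d l i
     then \<Sum>t<d. Y $$ (set_digit d n k i t, set_digit d n l i t) else 0)"

lemma trace_out_carrier [simp]: "trace_out d n i Y \<in> carrier_mat (d^n) (d^n)"
  unfolding trace_out_def by simp

lemma dim_trace_out [simp]: "dim_row (trace_out d n i Y) = d^n" "dim_col (trace_out d n i Y) = d^n"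
  unfolding trace_out_def by simp_all

lemma trace_out_index:
  "k < d^n \<Longrightarrow> l < d^n \<Longrightarrow> trace_out d n i Y $$ (k,l) =
    (if qdigit d k i = qdigit d l i then \<Sum>t<d. Y $$ (set_digit d n k i t, set_digit d n l i t) else 0)"
  unfolding trace_out_def by simp

lemma entries_agreeing_off_digit:
  assumes "0 < d" "i < n" "k < d^n" "l < d^n"
  shows "{q \<in> entries (d^n). qdigit d (fst q) i = qdigit d (snd q) i \<and>
      (\<forall>j<n. j \<noteq> i \<longrightarrow> qdigit d (fst q) j = qdigit d k j \<and> qdigit d (snd q) j = qdigit d l j)} =
    (\<lambda>t. (set_digit d n k i t, set_digit d n l i t)) ` {..<d}"
proof (intro equalityI subsetI)
  fix q assume q: "q \<in> {q \<in> entries (d^n). qdigit d (fst q) i = qdigit d (snd q) i \<and>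
      (\<forall>j<n. j \<noteq> i \<longrightarrow> qdigit d (fst q) j = qdigit d k j \<and> qdigit d (snd q) j = qdigit d l j)}"
  define t where "t = qdigit d (fst q) i"
  have t: "t < d"
    using assms(1) by (simp add: t_def qdigit_less)
  have "fst q = set_digit d n k i t"
    using q by (subst eq_set_digit_iff[OF assms(1) t assms(2)]) (auto simp: t_def)
  moreover have "snd q = set_digit d n l i t"
    using q by (subst eq_set_digit_iff[OF assms(1) t assms(2)]) (auto simp: t_def)
  ultimately have "q = (set_digit d n k i t, set_digit d n l i t)"
    by (simp add: prod_eq_iff)
  then show "q \<in> (\<lambda>t. (set_digit d n k i t, set_digit d n l i t)) ` {..<d}"
    using t by blast
next
  fix q assume "q \<in> (\<lambda>t. (set_digit d n k i t, set_digit d n l i t)) ` {..<d}"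
  then obtain t where t: "t < d" and q: "q = (set_digit d n k i t, set_digit d n l i t)"
    by auto
  have digits: "qdigit d (set_digit d n x i t) j = (if j = i then t else qdigit d x j)" if "j < n" for x j
    using assms(1) t that by (rule qdigit_set_digit)
  show "q \<in> {q \<in> entries (d^n). qdigit d (fst q) i = qdigit d (snd q) i \<and>
      (\<forall>j<n. j \<noteq> i \<longrightarrow> qdigit d (fst q) j = qdigit d k j \<and> qdigit d (snd q) j = qdigit d l j)}"
    unfolding q using assms(1,2) t by (simp add: digits set_digit_less)
qed

lemma pauli_kernel_trivial_at:
  assumes "0 < d" "i < n"
  shows "pauli_kernel d n (\<lambda>j x. if j = i \<and> x \<noteq> (0,0) then 0 else 1) p q =
    (if qdigit d (fst p) i = qdigit d (snd p) i \<and> qdigit d (fst q) i = qdigit d (snd q) i \<and>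
        (\<forall>j<n. j \<noteq> i \<longrightarrow> qdigit d (fst q) j = qdigit d (fst p) j \<and> qdigit d (snd q) j = qdigit d (snd p) j)
     then of_nat (d^(n-1)) else 0)"
proof -
  let ?P = "\<lambda>j. if j = i then qdigit d (fst p) i = qdigit d (snd p) i \<and> qdigit d (fst q) i = qdigit d (snd q) i
    else qdigit d (fst q) j = qdigit d (fst p) j \<and> qdigit d (snd q) j = qdigit d (snd p) j"
  have "pauli_kernel d n (\<lambda>j x. if j = i \<and> x \<noteq> (0,0) then 0 else 1) p q =
      (\<Prod>j<n. if ?P j then (if j = i then 1 else of_nat d) else 0)"
    unfolding pauli_kernel_def
  proof (intro prod.cong refl)
    fix j
    let ?F = "\<lambda>x. cnj (pauli1_entry d x (qdigit d (snd p) j) (qdigit d (fst p) j)) *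
      pauli1_entry d x (qdigit d (snd q) j) (qdigit d (fst q) j)"
    show "(\<Sum>x\<in>{..<d} \<times> {..<d}. (if j = i \<and> x \<noteq> (0,0) then 0 else 1) * ?F x) =
      (if ?P j then (if j = i then 1 else of_nat d) else 0)"
    proof (cases "j = i")
      case True
      have "(\<Sum>x\<in>{..<d} \<times> {..<d}. (if j = i \<and> x \<noteq> (0,0) then 0 else 1) * ?F x) =
          (\<Sum>x\<in>{..<d} \<times> {..<d}. if x = (0,0) then ?F x else 0)"
        using True by (intro sum.cong) auto
      also have "\<dots> = ?F (0,0)"
        using assms(1) by (simp add: sum.delta)
      finally show ?thesis
        using True assms(1) by (simp add: pauli1_entry_zero qdigit_less)
    next
      case False
      then show ?thesis
        using assms(1) by (simp add: pauli1_orthogonality qdigit_less eq_commute[of "qdigit d (fst q) j"])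
    qed
  qed
  also have "\<dots> = (if \<forall>j\<in>{..<n}. ?P j then \<Prod>j<n. if j = i then 1 else of_nat d else 0)"
    by (rule prod_if_else_zero) simp
  also have "(\<Prod>j<n. if j = i then 1 else of_nat d) = (of_nat (d^(n-1)) :: complex)"
    using assms(2) by (simp add: prod.remove[of "{..<n}" i])
  also have "(\<forall>j\<in>{..<n}. ?P j) \<longleftrightarrow> qdigit d (fst p) i = qdigit d (snd p) i \<and> qdigit d (fst q) i = qdigit d (snd q) i \<and>
      (\<forall>j<n. j \<noteq> i \<longrightarrow> qdigit d (fst q) j = qdigit d (fst p) j \<and> qdigit d (snd q) j = qdigit d (snd p) j)"
    using assms(2) by auto
  finally show ?thesis .
qed

lemma trace_out_index_eq_sum:
  assumes "0 < d" "i < n" "k < d^n" "l < d^n"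
  shows "trace_out d n i Y $$ (k,l) = (if qdigit d k i = qdigit d l i
    then \<Sum>q\<in>{q \<in> entries (d^n). qdigit d (fst q) i = qdigit d (snd q) i \<and>
      (\<forall>j<n. j \<noteq> i \<longrightarrow> qdigit d (fst q) j = qdigit d k j \<and> qdigit d (snd q) j = qdigit d l j)}. Y $$ q
    else 0)"
proof -
  have "inj_on (\<lambda>t. (set_digit d n k i t, set_digit d n l i t)) {..<d}"
  proof (rule inj_onI)
    fix t t' assume "t \<in> {..<d}" "t' \<in> {..<d}"
      and "(set_digit d n k i t, set_digit d n l i t) = (set_digit d n k i t', set_digit d n l i t')"
    then have "qdigit d (set_digit d n k i t) i = qdigit d (set_digit d n k i t') i"
      by simp
    then show "t = t'"
      using assms(1,2) \<open>t \<in> {..<d}\<close> \<open>t' \<in> {..<d}\<close> by (simp add: qdigit_set_digit)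
  qed
  then show ?thesis
    unfolding entries_agreeing_off_digit[OF assms] using assms(3,4)
    by (simp add: sum.reindex trace_out_index)
qed

lemma sum_pauli_coeff_trivial_at:
  assumes "0 < d" "i < n" "X \<in> carrier_mat (d^n) (d^n)" "Y \<in> carrier_mat (d^n) (d^n)"
  shows "(\<Sum>a\<in>{a \<in> Vn d n. a i = (0,0)}. cnj (pauli_coeff d n X a) * pauli_coeff d n Y a) =
    of_nat (d^(n-1)) * frob_inner (d^n) X (trace_out d n i Y)"
proof -
  let ?w = "\<lambda>j x. if j = i \<and> x \<noteq> (0,0) then 0 else 1 :: complex"
  have "(\<Sum>a\<in>{a \<in> Vn d n. a i = (0,0)}. cnj (pauli_coeff d n X a) * pauli_coeff d n Y a) =
      (\<Sum>a\<in>Vn d n. (\<Prod>j<n. ?w j (a j)) * (cnj (pauli_coeff d n X a) * pauli_coeff d n Y a))"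
    using assms(2) by (simp add: sum.inter_filter finite_Vn prod.remove[of "{..<n}" i])
      (intro sum.cong refl, simp)
  also have "\<dots> = (\<Sum>p\<in>entries (d^n). \<Sum>q\<in>entries (d^n). cnj (X $$ p) * Y $$ q * pauli_kernel d n ?w p q)"
    by (rule weighted_pauli_sum[OF assms(3,4)])
  also have "\<dots> = (\<Sum>p\<in>entries (d^n). cnj (X $$ p) * (of_nat (d^(n-1)) * trace_out d n i Y $$ p))"
  proof (intro sum.cong refl)
    fix p assume p: "p \<in> entries (d^n)"
    then obtain k l where kl: "p = (k,l)" "k < d^n" "l < d^n"
      by auto
    let ?C = "\<lambda>q. qdigit d (fst q) i = qdigit d (snd q) i \<and>
      (\<forall>j<n. j \<noteq> i \<longrightarrow> qdigit d (fst q) j = qdigit d k j \<and> qdigit d (snd q) j = qdigit d l j)"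
    have "(\<Sum>q\<in>entries (d^n). cnj (X $$ p) * Y $$ q * pauli_kernel d n ?w p q) =
        (\<Sum>q\<in>entries (d^n). cnj (X $$ p) * (of_nat (d^(n-1)) *
          (if qdigit d k i = qdigit d l i \<and> ?C q then Y $$ q else 0)))"
      unfolding pauli_kernel_trivial_at[OF assms(1,2)] kl(1) by (intro sum.cong refl) (auto simp: mult_ac)
    also have "\<dots> = cnj (X $$ p) * (of_nat (d^(n-1)) *
        (\<Sum>q\<in>entries (d^n). if qdigit d k i = qdigit d l i \<and> ?C q then Y $$ q else 0))"
      by (simp only: sum_distrib_left)
    also have "(\<Sum>q\<in>entries (d^n). if qdigit d k i = qdigit d l i \<and> ?C q then Y $$ q else 0) =
        trace_out d n i Y $$ p"
      unfolding kl(1) trace_out_index_eq_sum[OF assms(1,2) kl(2,3)]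
      by (cases "qdigit d k i = qdigit d l i") (simp_all add: sum.inter_filter)
    finally show "(\<Sum>q\<in>entries (d^n). cnj (X $$ p) * Y $$ q * pauli_kernel d n ?w p q) =
        cnj (X $$ p) * (of_nat (d^(n-1)) * trace_out d n i Y $$ p)" .
  qed
  finally show ?thesis
    by (simp add: frob_inner_def sum_distrib_left mult_ac)
qed

lemma frob_inner_trace_out:
  assumes "0 < d" "i < n" "X \<in> carrier_mat (d^n) (d^n)" "Y \<in> carrier_mat (d^n) (d^n)"
  shows "frob_inner (d^n) X (trace_out d n i Y) = frob_inner (d^n) (trace_out d n i X) Y"
proof -
  have "of_nat (d^(n-1)) * frob_inner (d^n) X (trace_out d n i Y) =
      cnj (of_nat (d^(n-1)) * frob_inner (d^n) Y (trace_out d n i X))"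
    unfolding sum_pauli_coeff_trivial_at[OF assms, symmetric]
      sum_pauli_coeff_trivial_at[OF assms(1,2,4,3), symmetric]
    by (simp add: mult.commute)
  then show ?thesis
    using assms(1) by (simp add: frob_inner_commute[of _ "trace_out d n i X"])
qed

section \<open>Adjoints and operators acting trivially on a qudit\<close>

lemma index_mult_mat_sum:
  "A \<in> carrier_mat nr m \<Longrightarrow> B \<in> carrier_mat m nc \<Longrightarrow> k < nr \<Longrightarrow> l < nc \<Longrightarrow>
    (A * B) $$ (k,l) = (\<Sum>j<m. A $$ (k,j) * B $$ (j,l))"
  by (simp add: scalar_prod_def atLeast0LessThan)

lemma dim_adj [simp]: "dim_row (adj A) = dim_col A" "dim_col (adj A) = dim_row A"
  unfolding adj_def by simp_all

lemma adj_carrier [simp]: "A \<in> carrier_mat nr nc \<Longrightarrow> adj A \<in> carrier_mat nc nr"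
  unfolding adj_def by simp

lemma index_adj [simp]: "i < dim_col A \<Longrightarrow> j < dim_row A \<Longrightarrow> adj A $$ (i,j) = cnj (A $$ (j,i))"
  unfolding adj_def by simp

lemma adj_adj [simp]: "adj (adj A) = A"
  by (rule eq_matI) auto

lemma adj_mult:
  assumes "A \<in> carrier_mat nr m" "B \<in> carrier_mat m nc"
  shows "adj (A * B) = adj B * adj A"
  by (rule eq_matI) (use assms in \<open>auto simp: scalar_prod_def mult.commute intro!: sum.cong\<close>)

lemma adj_smult: "adj (c \<cdot>\<^sub>m A) = cnj c \<cdot>\<^sub>m adj A"
  by (rule eq_matI) auto

lemma adj_one [simp]: "adj (1\<^sub>m N) = (1\<^sub>m N :: complex mat)"
  by (rule eq_matI) auto

lemma hermitian_op_index:
  assumes "hermitian_op h" "k < dim_row h" "m < dim_col h"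
  shows "cnj (h $$ (k,m)) = h $$ (m,k)"
  using index_adj[of m h k] assms unfolding hermitian_op_def by simp

text \<open>\<open>h = I\<^sub>i \<otimes> h'\<close> for an operator \<open>h'\<close> on the remaining qudits.\<close>

definition acts_trivially_on :: "nat \<Rightarrow> nat \<Rightarrow> complex mat \<Rightarrow> nat \<Rightarrow> bool" where
  "acts_trivially_on d n h i \<longleftrightarrow>
     (\<forall>k<d^n. \<forall>m<d^n. h $$ (k,m) \<noteq> 0 \<longrightarrow> qdigit d k i = qdigit d m i) \<and>
     (\<forall>k<d^n. \<forall>m<d^n. \<forall>t<d. qdigit d k i = qdigit d m i \<longrightarrow>
        h $$ (set_digit d n k i t, set_digit d n m i t) = h $$ (k,m))"

lemma two_qudit_supported_acts_trivially:
  assumes "0 < d" "two_qudit_supported d n h"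
  obtains S where "S \<subseteq> {..<n}" "card S \<le> 2" "\<And>i. i < n \<Longrightarrow> i \<notin> S \<Longrightarrow> acts_trivially_on d n h i"
proof -
  obtain S g where S: "S \<subseteq> {..<n}" "card S \<le> 2" and h: "\<forall>k<d^n. \<forall>l<d^n.
      h $$ (k,l) = (if \<forall>j<n. j \<notin> S \<longrightarrow> qdigit d k j = qdigit d l j
                    then g (\<lambda>j. if j \<in> S then qdigit d k j else 0) (\<lambda>j. if j \<in> S then qdigit d l j else 0)
                    else 0)"
    using assms(2) unfolding two_qudit_supported_def by blast
  have "acts_trivially_on d n h i" if i: "i < n" "i \<notin> S" for i
    unfolding acts_trivially_on_def
  proof (intro conjI allI impI)
    fix k m assume "k < d^n" "m < d^n" "h $$ (k,m) \<noteq> 0"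
    then show "qdigit d k i = qdigit d m i"
      using h i by (auto split: if_splits)
  next
    fix k m t assume km: "k < d^n" "m < d^n" and t: "t < d" and eq: "qdigit d k i = qdigit d m i"
    have off_S: "(\<forall>j<n. j \<notin> S \<longrightarrow> qdigit d (set_digit d n k i t) j = qdigit d (set_digit d n m i t) j) \<longleftrightarrow>
        (\<forall>j<n. j \<notin> S \<longrightarrow> qdigit d k j = qdigit d m j)"
      using eq assms(1) t by (auto simp: qdigit_set_digit)
    have on_S: "(\<lambda>j. if j \<in> S then qdigit d (set_digit d n x i t) j else 0) =
        (\<lambda>j. if j \<in> S then qdigit d x j else 0)" for x
    proof (rule ext)
      fix j
      show "(if j \<in> S then qdigit d (set_digit d n x i t) j else 0) = (if j \<in> S then qdigit d x j else 0)"
      proof (cases "j \<in> S")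
        case True
        then have "j < n" "j \<noteq> i"
          using S i by auto
        then show ?thesis
          using assms(1) t by (simp add: qdigit_set_digit)
      qed simp
    qed
    let ?k = "set_digit d n k i t" and ?m = "set_digit d n m i t"
    have "?k < d^n" "?m < d^n"
      using assms(1) t by (simp_all add: set_digit_less)
    then have "h $$ (?k, ?m) = (if \<forall>j<n. j \<notin> S \<longrightarrow> qdigit d ?k j = qdigit d ?m j
        then g (\<lambda>j. if j \<in> S then qdigit d ?k j else 0) (\<lambda>j. if j \<in> S then qdigit d ?m j else 0) else 0)"
      using h by blast
    also have "\<dots> = h $$ (k,m)"
      unfolding off_S on_S using h km by presburger
    finally show "h $$ (?k, ?m) = h $$ (k,m)" .
  qed
  then show ?thesis
    using S that by blast
qed

lemma acts_trivially_on_adj: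
  assumes "h \<in> carrier_mat (d^n) (d^n)" "acts_trivially_on d n h i"
  shows "acts_trivially_on d n (adj h) i"
  using assms unfolding acts_trivially_on_def by (auto simp: set_digit_less)

lemma sum_set_digit_reindex:
  assumes "0 < d" "i < n" "c < d" "t < d"
  shows "(\<Sum>m\<in>{m. m < d^n \<and> qdigit d m i = c}. f (set_digit d n m i t)) =
    (\<Sum>m\<in>{m. m < d^n \<and> qdigit d m i = t}. f m)"
proof (rule sum.reindex_bij_witness[of _ "\<lambda>m. set_digit d n m i c" "\<lambda>m. set_digit d n m i t"])
  fix m assume "m \<in> {m. m < d^n \<and> qdigit d m i = t}"
  then show "set_digit d n (set_digit d n m i c) i t = m" "set_digit d n m i c \<in> {m. m < d^n \<and> qdigit d m i = c}"
    using assms by (auto simp: set_digit_set_digit set_digit_qdigit set_digit_less qdigit_set_digit)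
next
  fix m assume "m \<in> {m. m < d^n \<and> qdigit d m i = c}"
  then show "set_digit d n (set_digit d n m i t) i c = m" "set_digit d n m i t \<in> {m. m < d^n \<and> qdigit d m i = t}"
    using assms by (auto simp: set_digit_set_digit set_digit_qdigit set_digit_less qdigit_set_digit)
qed simp

lemma sum_row_set_digit:
  assumes "acts_trivially_on d n h i" "0 < d" "i < n" "t < d" "k < d^n"
  shows "(\<Sum>m<d^n. h $$ (set_digit d n k i t, m) * f m) = (\<Sum>m<d^n. h $$ (k,m) * f (set_digit d n m i t))"
proof -
  have vanish: "h $$ (x, m) = 0" if "x < d^n" "m < d^n" "qdigit d m i \<noteq> qdigit d x i" for x m
    using assms(1) that unfolding acts_trivially_on_def by metis
  have kt: "set_digit d n k i t < d^n" "qdigit d (set_digit d n k i t) i = t"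
    using assms(2-4) by (simp_all add: set_digit_less qdigit_set_digit)
  have "(\<Sum>m<d^n. h $$ (set_digit d n k i t, m) * f m) =
      (\<Sum>m\<in>{m. m < d^n \<and> qdigit d m i = t}. h $$ (set_digit d n k i t, m) * f m)"
    using vanish[OF kt(1)] kt(2) by (intro sum.mono_neutral_right) auto
  also have "\<dots> = (\<Sum>m\<in>{m. m < d^n \<and> qdigit d m i = qdigit d k i}.
      h $$ (set_digit d n k i t, set_digit d n m i t) * f (set_digit d n m i t))"
    using assms(2-4) qdigit_less by (intro sum_set_digit_reindex[symmetric]) auto
  also have "\<dots> = (\<Sum>m\<in>{m. m < d^n \<and> qdigit d m i = qdigit d k i}. h $$ (k,m) * f (set_digit d n m i t))"
    using assms(1,4,5) unfolding acts_trivially_on_def by (intro sum.cong) auto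
  also have "\<dots> = (\<Sum>m<d^n. h $$ (k,m) * f (set_digit d n m i t))"
    using vanish[OF assms(5)] by (intro sum.mono_neutral_left) auto
  finally show ?thesis .
qed

lemma trace_out_mult_left:
  assumes "acts_trivially_on d n h i" "0 < d" "i < n"
    and "h \<in> carrier_mat (d^n) (d^n)" "Y \<in> carrier_mat (d^n) (d^n)"
  shows "trace_out d n i (h * Y) = h * trace_out d n i Y"
proof (rule eq_matI)
  fix k l assume "k < dim_row (h * trace_out d n i Y)" "l < dim_col (h * trace_out d n i Y)"
  then have k: "k < d^n" and l: "l < d^n"
    using assms(4) by auto
  have same_digit: "h $$ (k,m) * (if qdigit d m i = qdigit d l i then y m else 0) =
      h $$ (k,m) * (if qdigit d k i = qdigit d l i then y m else 0)" if "m < d^n" for m y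
    using assms(1) k that unfolding acts_trivially_on_def by (cases "h $$ (k,m) = 0") auto
  have "trace_out d n i (h * Y) $$ (k,l) = (if qdigit d k i = qdigit d l i
      then \<Sum>t<d. \<Sum>m<d^n. h $$ (k,m) * Y $$ (set_digit d n m i t, set_digit d n l i t) else 0)"
    using assms k l
    by (simp add: trace_out_index index_mult_mat_sum[OF assms(4,5)] set_digit_less sum_row_set_digit
        del: index_mult_mat)
  also have "\<dots> = (\<Sum>m<d^n. h $$ (k,m) * (if qdigit d k i = qdigit d l i
      then \<Sum>t<d. Y $$ (set_digit d n m i t, set_digit d n l i t) else 0))"
    by (simp add: sum.swap[of _ "{..<d}"] sum_distrib_left)
  also have "\<dots> = (\<Sum>m<d^n. h $$ (k,m) * (if qdigit d m i = qdigit d l i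
      then \<Sum>t<d. Y $$ (set_digit d n m i t, set_digit d n l i t) else 0))"
    by (intro sum.cong refl) (rule same_digit[symmetric], simp)
  also have "\<dots> = (h * trace_out d n i Y) $$ (k,l)"
    unfolding index_mult_mat_sum[OF assms(4) trace_out_carrier k l] using l
    by (intro sum.cong refl) (simp add: trace_out_index)
  finally show "trace_out d n i (h * Y) $$ (k,l) = (h * trace_out d n i Y) $$ (k,l)" .
qed (use assms(4) in auto)

lemma trace_out_adj:
  assumes "Y \<in> carrier_mat (d^n) (d^n)" "0 < d"
  shows "adj (trace_out d n i Y) = trace_out d n i (adj Y)"
  by (rule eq_matI) (use assms in \<open>auto simp: trace_out_index set_digit_less\<close>)

lemma trace_out_mult_right:
  assumes "acts_trivially_on d n h i" "0 < d" "i < n"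
    and "h \<in> carrier_mat (d^n) (d^n)" "Y \<in> carrier_mat (d^n) (d^n)"
  shows "trace_out d n i (Y * h) = trace_out d n i Y * h"
proof -
  have "adj (trace_out d n i (Y * h)) = trace_out d n i (adj h * adj Y)"
    using assms(2,4,5) by (simp add: trace_out_adj adj_mult[OF assms(5,4)])
  also have "\<dots> = adj h * adj (trace_out d n i Y)"
    using assms by (simp add: trace_out_mult_left acts_trivially_on_adj trace_out_adj)
  also have "\<dots> = adj (trace_out d n i Y * h)"
    using assms(4) by (simp add: adj_mult[of _ "d^n" "d^n" h])
  finally show ?thesis
    by (metis adj_adj)
qed

section \<open>Frobenius geometry and the commutator\<close>

lemma frob_inner_nested: "frob_inner N X Y = (\<Sum>k<N. \<Sum>l<N. cnj (X $$ (k,l)) * Y $$ (k,l))"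
  unfolding frob_inner_def by (simp add: sum.cartesian_product)

lemma frob_inner_mult_left:
  assumes "A \<in> carrier_mat N N" "X \<in> carrier_mat N N" "Y \<in> carrier_mat N N"
  shows "frob_inner N X (A * Y) = frob_inner N (adj A * X) Y"
proof -
  have "frob_inner N X (A * Y) = (\<Sum>k<N. \<Sum>l<N. \<Sum>m<N. cnj (X $$ (k,l)) * A $$ (k,m) * Y $$ (m,l))"
    using assms by (simp add: frob_inner_nested index_mult_mat_sum sum_distrib_left mult.assoc
        del: index_mult_mat)
  also have "\<dots> = (\<Sum>l<N. \<Sum>k<N. \<Sum>m<N. cnj (X $$ (k,l)) * A $$ (k,m) * Y $$ (m,l))"
    by (rule sum.swap)
  also have "\<dots> = (\<Sum>l<N. \<Sum>m<N. \<Sum>k<N. cnj (X $$ (k,l)) * A $$ (k,m) * Y $$ (m,l))"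
    by (rule sum.cong[OF refl], rule sum.swap)
  also have "\<dots> = (\<Sum>m<N. \<Sum>l<N. \<Sum>k<N. cnj (X $$ (k,l)) * A $$ (k,m) * Y $$ (m,l))"
    by (rule sum.swap)
  also have "\<dots> = (\<Sum>m<N. \<Sum>l<N. cnj ((adj A * X) $$ (m,l)) * Y $$ (m,l))"
    using assms by (auto simp: index_mult_mat_sum[OF adj_carrier[OF assms(1)] assms(2)]
        sum_distrib_left mult_ac simp del: index_mult_mat intro!: sum.cong)
  finally show ?thesis
    by (simp add: frob_inner_nested)
qed

lemma frob_inner_mult_right:
  assumes "A \<in> carrier_mat N N" "X \<in> carrier_mat N N" "Y \<in> carrier_mat N N"
  shows "frob_inner N X (Y * A) = frob_inner N (X * adj A) Y"
proof -
  have "frob_inner N X (Y * A) = (\<Sum>k<N. \<Sum>l<N. \<Sum>m<N. cnj (X $$ (k,l)) * Y $$ (k,m) * A $$ (m,l))"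
    using assms by (simp add: frob_inner_nested index_mult_mat_sum sum_distrib_left mult.assoc
        del: index_mult_mat)
  also have "\<dots> = (\<Sum>k<N. \<Sum>m<N. \<Sum>l<N. cnj (X $$ (k,l)) * Y $$ (k,m) * A $$ (m,l))"
    by (rule sum.cong[OF refl], rule sum.swap)
  also have "\<dots> = (\<Sum>k<N. \<Sum>m<N. cnj ((X * adj A) $$ (k,m)) * Y $$ (k,m))"
    using assms by (auto simp: index_mult_mat_sum[OF assms(2) adj_carrier[OF assms(1)]]
        sum_distrib_left mult_ac simp del: index_mult_mat intro!: sum.cong)
  finally show ?thesis
    by (simp add: frob_inner_nested)
qed

lemma frob_inner_smult_right: "Y \<in> carrier_mat N N \<Longrightarrow> frob_inner N X (c \<cdot>\<^sub>m Y) = c * frob_inner N X Y"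
  unfolding frob_inner_def by (auto simp: sum_distrib_left mult_ac intro!: sum.cong)

lemma frob_inner_minus_right:
  "Y \<in> carrier_mat N N \<Longrightarrow> Z \<in> carrier_mat N N \<Longrightarrow>
    frob_inner N X (Y - Z) = frob_inner N X Y - frob_inner N X Z"
  unfolding frob_inner_def by (auto simp: right_diff_distrib sum_subtractf[symmetric] intro!: sum.cong)

definition icomm :: "complex mat \<Rightarrow> complex mat \<Rightarrow> complex mat" where
  "icomm h Q = (- \<i>) \<cdot>\<^sub>m (h * Q - Q * h)"

lemma icomm_carrier [simp]:
  "h \<in> carrier_mat N N \<Longrightarrow> Q \<in> carrier_mat N N \<Longrightarrow> icomm h Q \<in> carrier_mat N N"
  unfolding icomm_def by auto

lemma frob_inner_icomm:
  assumes "hermitian_op h" "h \<in> carrier_mat N N" "X \<in> carrier_mat N N" "Y \<in> carrier_mat N N"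
  shows "frob_inner N X (icomm h Y) = - frob_inner N (icomm h X) Y"
proof -
  have adj_h: "adj h = h"
    using assms(1) unfolding hermitian_op_def .
  have hX: "h * X \<in> carrier_mat N N" and Xh: "X * h \<in> carrier_mat N N"
    and hY: "h * Y \<in> carrier_mat N N" and Yh: "Y * h \<in> carrier_mat N N"
    using assms(2-4) by auto
  have "frob_inner N X (icomm h Y) = - \<i> * (frob_inner N X (h * Y) - frob_inner N X (Y * h))"
    unfolding icomm_def using hY Yh
    by (simp add: frob_inner_smult_right[OF minus_carrier_mat[OF Yh]] frob_inner_minus_right)
  also have "\<dots> = - \<i> * (frob_inner N (h * X) Y - frob_inner N (X * h) Y)"
    by (simp add: frob_inner_mult_left[OF assms(2-4)] frob_inner_mult_right[OF assms(2-4)] adj_h)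
  also have "\<dots> = - cnj (- \<i> * (frob_inner N Y (h * X) - frob_inner N Y (X * h)))"
    using frob_inner_commute[of N "h * X" Y] frob_inner_commute[of N "X * h" Y] by simp
  also have "\<dots> = - frob_inner N (icomm h X) Y"
    unfolding icomm_def frob_inner_commute[of N "_ \<cdot>\<^sub>m _" Y] using hX Xh
    by (simp add: frob_inner_smult_right[OF minus_carrier_mat[OF Xh]] frob_inner_minus_right)
  finally show ?thesis .
qed

lemma Re_eq_0_if_eq_neg_cnj: "z = - cnj z \<Longrightarrow> Re z = 0"
  by (simp add: complex_eq_iff)

lemma Re_frob_inner_icomm:
  assumes "hermitian_op h" "h \<in> carrier_mat N N" "Q \<in> carrier_mat N N"
  shows "Re (frob_inner N Q (icomm h Q)) = 0"
proof -
  have "frob_inner N Q (icomm h Q) = - cnj (frob_inner N Q (icomm h Q))"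
    using frob_inner_icomm[OF assms(1,2,3,3)] frob_inner_commute[of N "icomm h Q" Q] by simp
  then show ?thesis
    by (rule Re_eq_0_if_eq_neg_cnj)
qed

lemma trace_out_smult:
  "0 < d \<Longrightarrow> Y \<in> carrier_mat (d^n) (d^n) \<Longrightarrow> trace_out d n i (c \<cdot>\<^sub>m Y) = c \<cdot>\<^sub>m trace_out d n i Y"
  by (rule eq_matI) (auto simp: trace_out_index set_digit_less sum_distrib_left)

lemma trace_out_minus:
  "0 < d \<Longrightarrow> Y \<in> carrier_mat (d^n) (d^n) \<Longrightarrow> Z \<in> carrier_mat (d^n) (d^n) \<Longrightarrow>
    trace_out d n i (Y - Z) = trace_out d n i Y - trace_out d n i Z"
  by (rule eq_matI) (auto simp: trace_out_index set_digit_less sum_subtractf)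

lemma trace_out_icomm:
  assumes "acts_trivially_on d n h i" "0 < d" "i < n"
    and "h \<in> carrier_mat (d^n) (d^n)" "Q \<in> carrier_mat (d^n) (d^n)"
  shows "trace_out d n i (icomm h Q) = icomm h (trace_out d n i Q)"
  using assms
  by (simp add: icomm_def trace_out_smult trace_out_minus minus_carrier_mat trace_out_mult_left trace_out_mult_right)

lemma Re_frob_inner_trace_out_icomm:
  assumes "acts_trivially_on d n h i" "hermitian_op h" "0 < d" "i < n"
    and "h \<in> carrier_mat (d^n) (d^n)" "Q \<in> carrier_mat (d^n) (d^n)"
  shows "Re (frob_inner (d^n) Q (trace_out d n i (icomm h Q))) = 0"
proof -
  let ?T = "trace_out d n i"
  have "frob_inner (d^n) Q (?T (icomm h Q)) = - frob_inner (d^n) (icomm h Q) (?T Q)"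
    using assms by (simp add: trace_out_icomm frob_inner_icomm)
  also have "\<dots> = - frob_inner (d^n) (?T (icomm h Q)) Q"
    using assms by (simp add: frob_inner_trace_out)
  finally have "frob_inner (d^n) Q (?T (icomm h Q)) = - cnj (frob_inner (d^n) Q (?T (icomm h Q)))"
    by (simp add: frob_inner_commute[of _ "?T (icomm h Q)" Q])
  then show ?thesis
    by (rule Re_eq_0_if_eq_neg_cnj)
qed

section \<open>Frobenius and operator norms\<close>

definition frob_norm :: "nat \<Rightarrow> complex mat \<Rightarrow> real" where
  "frob_norm N X = L2_set (\<lambda>p. cmod (X $$ p)) (entries N)"

lemma frob_norm_nonneg [simp]: "0 \<le> frob_norm N X"
  unfolding frob_norm_def by simp

lemma frob_norm_sq: "(frob_norm N X)\<^sup>2 = (\<Sum>p\<in>entries N. (cmod (X $$ p))\<^sup>2)"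
  unfolding frob_norm_def L2_set_def by (simp add: sum_nonneg)

lemma frob_inner_self: "frob_inner N X X = of_real ((frob_norm N X)\<^sup>2)"
  unfolding frob_norm_sq frob_inner_def of_real_sum
  by (simp only: cnj_mult_self)

lemma frob_norm_adj:
  assumes "X \<in> carrier_mat N N"
  shows "frob_norm N (adj X) = frob_norm N X"
proof -
  have "(\<Sum>p\<in>entries N. (cmod (adj X $$ p))\<^sup>2) = (\<Sum>p\<in>entries N. (cmod (X $$ prod.swap p))\<^sup>2)"
    using assms by (intro sum.cong) auto
  also have "\<dots> = (\<Sum>p\<in>entries N. (cmod (X $$ p))\<^sup>2)"
    by (rule sum.reindex_bij_witness[of _ prod.swap prod.swap]) auto
  finally show ?thesis
    using frob_norm_sq[of N] frob_norm_nonneg by (metis power2_eq_imp_eq)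
qed

lemma cvec_norm_eq_L2_set: "cvec_norm v = L2_set (\<lambda>i. cmod (v $ i)) {..<dim_vec v}"
  unfolding cvec_norm_def L2_set_def ..

lemma cvec_norm_nonneg [simp]: "0 \<le> cvec_norm v"
  unfolding cvec_norm_eq_L2_set by simp

lemma cvec_norm_smult: "cvec_norm (c \<cdot>\<^sub>v v) = cmod c * cvec_norm v"
  unfolding cvec_norm_eq_L2_set L2_set_right_distrib[OF norm_ge_zero]
  by (intro L2_set_cong) (auto simp: norm_mult)

lemma cvec_norm_zero [simp]: "cvec_norm (0\<^sub>v N) = 0"
  unfolding cvec_norm_eq_L2_set by (rule L2_set_0') simp

lemma op_norm_set_bdd_above:
  assumes "h \<in> carrier_mat N N"
  shows "bdd_above {cvec_norm (h *\<^sub>v v) | v. v \<in> carrier_vec (dim_col h) \<and> cvec_norm v \<le> 1}"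
proof (rule bdd_aboveI)
  fix x assume "x \<in> {cvec_norm (h *\<^sub>v v) | v. v \<in> carrier_vec (dim_col h) \<and> cvec_norm v \<le> 1}"
  then obtain v where x: "x = cvec_norm (h *\<^sub>v v)" and v: "v \<in> carrier_vec N" and nv: "cvec_norm v \<le> 1"
    using assms by auto
  have row_bound: "cmod ((h *\<^sub>v v) $ k) \<le> L2_set (\<lambda>m. cmod (h $$ (k,m))) {..<N}" if "k < N" for k
  proof -
    have "cmod ((h *\<^sub>v v) $ k) \<le> (\<Sum>m<N. cmod (h $$ (k,m)) * cmod (v $ m))"
      using assms v that by (simp add: scalar_prod_def atLeast0LessThan norm_mult
          order_trans[OF norm_sum])
    also have "\<dots> \<le> L2_set (\<lambda>m. cmod (h $$ (k,m))) {..<N} * cvec_norm v"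
      using L2_set_mult_ineq[of "\<lambda>m. cmod (h $$ (k,m))" "\<lambda>m. cmod (v $ m)" "{..<N}"] v
      by (simp add: cvec_norm_eq_L2_set)
    also have "\<dots> \<le> L2_set (\<lambda>m. cmod (h $$ (k,m))) {..<N}"
      using nv by (simp add: mult_left_le)
    finally show ?thesis .
  qed
  have dim: "dim_vec (h *\<^sub>v v) = N"
    using assms by simp
  show "x \<le> L2_set (\<lambda>k. L2_set (\<lambda>m. cmod (h $$ (k,m))) {..<N}) {..<N}"
    unfolding x cvec_norm_eq_L2_set dim using row_bound by (intro L2_set_mono) simp_all
qed

lemma op_norm_nonneg:
  assumes "h \<in> carrier_mat N N"
  shows "0 \<le> op_norm h"
proof -
  have "cvec_norm (h *\<^sub>v 0\<^sub>v N) \<le> op_norm h"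
    unfolding op_norm_def using assms by (intro cSup_upper op_norm_set_bdd_above) auto
  then show ?thesis
    using cvec_norm_nonneg order_trans by blast
qed

lemma cvec_norm_mult_le:
  assumes "h \<in> carrier_mat N N" "v \<in> carrier_vec N"
  shows "cvec_norm (h *\<^sub>v v) \<le> op_norm h * cvec_norm v"
proof (cases "cvec_norm v = 0")
  case True
  then have "v = 0 \<cdot>\<^sub>v v"
    using assms(2) by (intro eq_vecI) (auto simp: cvec_norm_eq_L2_set L2_set_eq_0_iff)
  then have "cvec_norm (h *\<^sub>v v) = 0"
    using assms by (metis cvec_norm_smult mult_mat_vec mult_zero_left norm_zero)
  then show ?thesis
    using True by simp
next
  case False
  then have pos: "0 < cvec_norm v"
    using cvec_norm_nonneg by (metis order_le_neq_trans)
  define w where "w = (1 / of_real (cvec_norm v)) \<cdot>\<^sub>v v"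
  have "cvec_norm w = 1" and "w \<in> carrier_vec (dim_col h)"
    using pos assms by (auto simp: w_def cvec_norm_smult norm_divide)
  then have "cvec_norm (h *\<^sub>v w) \<le> op_norm h"
    unfolding op_norm_def using assms(1) by (intro cSup_upper op_norm_set_bdd_above) auto
  moreover have "cvec_norm (h *\<^sub>v w) = cvec_norm (h *\<^sub>v v) / cvec_norm v"
    using assms pos by (simp add: w_def mult_mat_vec cvec_norm_smult norm_divide)
  ultimately show ?thesis
    using pos by (simp add: divide_le_eq)
qed

lemma frob_norm_sq_cols:
  assumes "X \<in> carrier_mat N N"
  shows "(frob_norm N X)\<^sup>2 = (\<Sum>l<N. (cvec_norm (col X l))\<^sup>2)"
proof -
  have "(frob_norm N X)\<^sup>2 = (\<Sum>k<N. \<Sum>l<N. (cmod (X $$ (k,l)))\<^sup>2)"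
    unfolding frob_norm_sq by (simp add: sum.cartesian_product)
  also have "\<dots> = (\<Sum>l<N. \<Sum>k<N. (cmod (X $$ (k,l)))\<^sup>2)"
    by (rule sum.swap)
  also have "\<dots> = (\<Sum>l<N. (cvec_norm (col X l))\<^sup>2)"
    using assms by (intro sum.cong refl) (simp add: cvec_norm_def sum_nonneg)
  finally show ?thesis .
qed

lemma frob_norm_mult_left:
  assumes "h \<in> carrier_mat N N" "X \<in> carrier_mat N N"
  shows "frob_norm N (h * X) \<le> op_norm h * frob_norm N X"
proof (rule power2_le_imp_le)
  have "(cvec_norm (col (h * X) l))\<^sup>2 \<le> (op_norm h * cvec_norm (col X l))\<^sup>2" if "l < N" for l
    using assms that by (simp add: cvec_norm_mult_le power_mono)
  then have "(\<Sum>l<N. (cvec_norm (col (h * X) l))\<^sup>2) \<le> (\<Sum>l<N. (op_norm h * cvec_norm (col X l))\<^sup>2)"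
    by (intro sum_mono) simp
  then show "(frob_norm N (h * X))\<^sup>2 \<le> (op_norm h * frob_norm N X)\<^sup>2"
    using assms by (simp add: frob_norm_sq_cols power_mult_distrib sum_distrib_left)
  show "0 \<le> op_norm h * frob_norm N X"
    using assms(1) by (simp add: op_norm_nonneg)
qed

lemma frob_norm_mult_right:
  assumes "hermitian_op h" "h \<in> carrier_mat N N" "X \<in> carrier_mat N N"
  shows "frob_norm N (X * h) \<le> op_norm h * frob_norm N X"
proof -
  have "frob_norm N (X * h) = frob_norm N (h * adj X)"
    using assms frob_norm_adj[of "X * h" N] adj_mult[OF assms(3,2)]
    unfolding hermitian_op_def by simp
  also have "\<dots> \<le> op_norm h * frob_norm N X"
    using assms(2,3) frob_norm_mult_left[of h N "adj X"] by (simp add: frob_norm_adj)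
  finally show ?thesis .
qed

lemma frob_norm_smult: "X \<in> carrier_mat N N \<Longrightarrow> frob_norm N (c \<cdot>\<^sub>m X) = cmod c * frob_norm N X"
  unfolding frob_norm_def L2_set_right_distrib[OF norm_ge_zero]
  by (intro L2_set_cong) (auto simp: norm_mult)

lemma frob_norm_minus_le:
  assumes "X \<in> carrier_mat N N" "Y \<in> carrier_mat N N"
  shows "frob_norm N (X - Y) \<le> frob_norm N X + frob_norm N Y"
proof -
  have "frob_norm N (X - Y) \<le> L2_set (\<lambda>p. cmod (X $$ p) + cmod (Y $$ p)) (entries N)"
    unfolding frob_norm_def using assms by (intro L2_set_mono) (auto simp: norm_triangle_ineq4)
  also have "\<dots> \<le> frob_norm N X + frob_norm N Y"
    unfolding frob_norm_def by (rule L2_set_triangle_ineq)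
  finally show ?thesis .
qed

lemma frob_norm_icomm:
  assumes "hermitian_op h" "h \<in> carrier_mat N N" "Q \<in> carrier_mat N N"
  shows "frob_norm N (icomm h Q) \<le> 2 * op_norm h * frob_norm N Q"
proof -
  have "frob_norm N (icomm h Q) = frob_norm N (h * Q - Q * h)"
    using assms(2,3) by (simp add: icomm_def frob_norm_smult minus_carrier_mat)
  also have "\<dots> \<le> frob_norm N (h * Q) + frob_norm N (Q * h)"
    using assms(2,3) by (intro frob_norm_minus_le) auto
  also have "\<dots> \<le> op_norm h * frob_norm N Q + op_norm h * frob_norm N Q"
    using assms by (intro add_mono frob_norm_mult_left frob_norm_mult_right)
  finally show ?thesis
    by simp
qed

lemma mtrace_adj_mult:
  assumes "A \<in> carrier_mat N N" "B \<in> carrier_mat N N"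
  shows "mtrace (adj A * B) = frob_inner N A B"
proof -
  have "adj A * B \<in> carrier_mat N N"
    using assms by (metis adj_carrier mult_carrier_mat)
  then have "mtrace (adj A * B) = (\<Sum>k<N. \<Sum>l<N. cnj (A $$ (l,k)) * B $$ (l,k))"
    unfolding mtrace_def using assms
    by (auto simp: index_mult_mat_sum[OF adj_carrier[OF assms(1)] assms(2)] simp del: index_mult_mat
        intro!: sum.cong)
  also have "\<dots> = frob_inner N A B"
    unfolding frob_inner_nested by (rule sum.swap)
  finally show ?thesis .
qed

lemma hs_norm_eq_frob_norm:
  assumes "A \<in> carrier_mat (d^n) (d^n)"
  shows "hs_norm d n A = frob_norm (d^n) A / sqrt (real (d^n))"
  using assms
  by (simp add: hs_norm_def hs_inner_def mtrace_adj_mult frob_inner_self real_sqrt_divide)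

lemma hs_norm_one:
  assumes "0 < d"
  shows "hs_norm d n (1\<^sub>m (d^n)) = 1"
proof -
  have "mtrace (adj (1\<^sub>m (d^n)) * 1\<^sub>m (d^n)) = of_nat (d^n)"
    unfolding adj_one mtrace_def by simp
  then show ?thesis
    unfolding hs_norm_def hs_inner_def using assms by simp
qed

section \<open>Influence as a sum of site-wise quadratic forms\<close>

definition influence_form :: "nat \<Rightarrow> nat \<Rightarrow> nat \<Rightarrow> complex mat \<Rightarrow> complex mat \<Rightarrow> complex" where
  "influence_form d n i X Y =
     (\<Sum>a\<in>{a \<in> Vn d n. a i \<noteq> (0,0)}. cnj (pauli_coeff d n X a) * pauli_coeff d n Y a)"

lemma influence_form_commute: "influence_form d n i Y X = cnj (influence_form d n i X Y)"
  unfolding influence_form_def by (simp add: mult.commute)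

lemma influence_eq_sum_influence_form:
  "influence d n X = Re (\<Sum>i<n. influence_form d n i X X) / (real (d^n))\<^sup>2"
proof -
  have "Re (\<Sum>i<n. influence_form d n i X X) =
      (\<Sum>i<n. \<Sum>a\<in>Vn d n. if a i \<noteq> (0,0) then (cmod (pauli_coeff d n X a))\<^sup>2 else 0)"
    unfolding influence_form_def cnj_mult_self
    by (simp add: sum.inter_filter finite_Vn if_distrib[of Re] cong: if_cong)
  also have "\<dots> = (\<Sum>a\<in>Vn d n. real (pweight n a) * (cmod (pauli_coeff d n X a))\<^sup>2)"
    unfolding pweight_def by (subst sum.swap) (simp add: sum.If_cases Int_def)
  finally show ?thesis
    unfolding influence_def pauli_prob_def pauli_coeff_def
    by (simp add: sum_divide_distrib power_mult power_mult_distrib mult.commute)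
qed

lemma influence_form_eq_frob_inner:
  assumes "0 < d" "i < n" "X \<in> carrier_mat (d^n) (d^n)" "Y \<in> carrier_mat (d^n) (d^n)"
  shows "influence_form d n i X Y =
    of_nat (d^n) * frob_inner (d^n) X Y - of_nat (d^(n-1)) * frob_inner (d^n) X (trace_out d n i Y)"
proof -
  let ?f = "\<lambda>a. cnj (pauli_coeff d n X a) * pauli_coeff d n Y a"
  have "(\<Sum>a\<in>Vn d n. ?f a) =
      (\<Sum>a\<in>Vn d n \<inter> {a. a i \<noteq> (0,0)}. ?f a) + (\<Sum>a\<in>Vn d n - {a. a i \<noteq> (0,0)}. ?f a)"
    by (rule sum.Int_Diff[OF finite_Vn])
  also have "Vn d n \<inter> {a. a i \<noteq> (0,0)} = {a \<in> Vn d n. a i \<noteq> (0,0)}"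
    by blast
  also have "Vn d n - {a. a i \<noteq> (0,0)} = {a \<in> Vn d n. a i = (0,0)}"
    by blast
  finally have "(\<Sum>a\<in>Vn d n. ?f a) = influence_form d n i X Y + (\<Sum>a\<in>{a \<in> Vn d n. a i = (0,0)}. ?f a)"
    unfolding influence_form_def .
  then show ?thesis
    using pauli_parseval[OF assms(1,3,4)] sum_pauli_coeff_trivial_at[OF assms] by simp
qed

lemma Re_influence_form_icomm:
  assumes "acts_trivially_on d n h i" "hermitian_op h" "0 < d" "i < n"
    and "h \<in> carrier_mat (d^n) (d^n)" "Q \<in> carrier_mat (d^n) (d^n)"
  shows "Re (influence_form d n i Q (icomm h Q)) = 0"
  using assms
  by (simp add: influence_form_eq_frob_inner Re_frob_inner_icomm Re_frob_inner_trace_out_icomm)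

lemma L2_set_pauli_coeff:
  assumes "0 < d" "X \<in> carrier_mat (d^n) (d^n)"
  shows "L2_set (\<lambda>a. cmod (pauli_coeff d n X a)) (Vn d n) = sqrt (real (d^n)) * frob_norm (d^n) X"
proof -
  have "complex_of_real (\<Sum>a\<in>Vn d n. (cmod (pauli_coeff d n X a))\<^sup>2) =
      (\<Sum>a\<in>Vn d n. cnj (pauli_coeff d n X a) * pauli_coeff d n X a)"
    by (simp only: of_real_sum cnj_mult_self)
  also have "\<dots> = complex_of_real (real (d^n) * (frob_norm (d^n) X)\<^sup>2)"
    unfolding pauli_parseval[OF assms(1,2,2)] frob_inner_self by simp
  finally have "(\<Sum>a\<in>Vn d n. (cmod (pauli_coeff d n X a))\<^sup>2) = real (d^n) * (frob_norm (d^n) X)\<^sup>2"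
    using of_real_eq_iff by blast
  then show ?thesis
    unfolding L2_set_def by (simp add: real_sqrt_mult)
qed

lemma norm_influence_form_le:
  assumes "0 < d" "X \<in> carrier_mat (d^n) (d^n)" "Y \<in> carrier_mat (d^n) (d^n)"
  shows "cmod (influence_form d n i X Y) \<le> real (d^n) * frob_norm (d^n) X * frob_norm (d^n) Y"
proof -
  let ?S = "{a \<in> Vn d n. a i \<noteq> (0,0)}"
  have sub: "L2_set (\<lambda>a. cmod (pauli_coeff d n Z a)) ?S \<le> L2_set (\<lambda>a. cmod (pauli_coeff d n Z a)) (Vn d n)" for Z
    unfolding L2_set_def by (intro real_sqrt_le_mono sum_mono2 finite_Vn) auto
  have "cmod (influence_form d n i X Y) \<le> (\<Sum>a\<in>?S. \<bar>cmod (pauli_coeff d n X a)\<bar> * \<bar>cmod (pauli_coeff d n Y a)\<bar>)"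
    unfolding influence_form_def by (rule order_trans[OF norm_sum]) (simp add: norm_mult)
  also have "\<dots> \<le> L2_set (\<lambda>a. cmod (pauli_coeff d n X a)) ?S * L2_set (\<lambda>a. cmod (pauli_coeff d n Y a)) ?S"
    by (rule L2_set_mult_ineq)
  also have "\<dots> \<le> L2_set (\<lambda>a. cmod (pauli_coeff d n X a)) (Vn d n) * L2_set (\<lambda>a. cmod (pauli_coeff d n Y a)) (Vn d n)"
    by (intro mult_mono sub) auto
  also have "\<dots> = real (d^n) * frob_norm (d^n) X * frob_norm (d^n) Y"
    unfolding L2_set_pauli_coeff[OF assms(1,2)] L2_set_pauli_coeff[OF assms(1,3)] by (simp add: mult_ac)
  finally show ?thesis .
qed

lemma sum_abs_Re_influence_form_icomm_le:
  assumes "0 < d" "hermitian_op h" "two_qudit_supported d n h"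
    and "h \<in> carrier_mat (d^n) (d^n)" "Q \<in> carrier_mat (d^n) (d^n)"
  shows "(\<Sum>i<n. \<bar>Re (influence_form d n i Q (icomm h Q))\<bar>) \<le>
    4 * real (d^n) * op_norm h * (frob_norm (d^n) Q)\<^sup>2"
proof -
  obtain S where S: "S \<subseteq> {..<n}" "card S \<le> 2"
    and trivial: "\<And>i. i < n \<Longrightarrow> i \<notin> S \<Longrightarrow> acts_trivially_on d n h i"
    using two_qudit_supported_acts_trivially[OF assms(1,3)] by blast
  have site: "\<bar>Re (influence_form d n i Q (icomm h Q))\<bar> \<le> 2 * real (d^n) * op_norm h * (frob_norm (d^n) Q)\<^sup>2" for i
  proof -
    have "\<bar>Re (influence_form d n i Q (icomm h Q))\<bar> \<le> real (d^n) * frob_norm (d^n) Q * frob_norm (d^n) (icomm h Q)"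
      using abs_Re_le_cmod norm_influence_form_le[OF assms(1,5)] assms(4,5) by (metis icomm_carrier order_trans)
    also have "\<dots> \<le> real (d^n) * frob_norm (d^n) Q * (2 * op_norm h * frob_norm (d^n) Q)"
      using assms by (intro mult_left_mono frob_norm_icomm) auto
    finally show ?thesis
      by (simp add: power2_eq_square mult_ac)
  qed
  have "(\<Sum>i<n. \<bar>Re (influence_form d n i Q (icomm h Q))\<bar>) = (\<Sum>i\<in>S. \<bar>Re (influence_form d n i Q (icomm h Q))\<bar>)"
    using S(1) assms trivial by (intro sum.mono_neutral_right) (auto simp: Re_influence_form_icomm)
  also have "\<dots> \<le> (\<Sum>i\<in>S. 2 * real (d^n) * op_norm h * (frob_norm (d^n) Q)\<^sup>2)"
    by (rule sum_mono) (rule site)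
  also have "\<dots> = real (card S) * (2 * real (d^n) * op_norm h * (frob_norm (d^n) Q)\<^sup>2)"
    by simp
  also have "\<dots> \<le> 2 * (2 * real (d^n) * op_norm h * (frob_norm (d^n) Q)\<^sup>2)"
    using S(2) assms(4) by (intro mult_right_mono) (auto simp: op_norm_nonneg)
  finally show ?thesis
    by simp
qed

lemma pauli_coeff_linear:
  assumes "Y \<in> carrier_mat (d^n) (d^n)" "\<And>j. j < m \<Longrightarrow> K j \<in> carrier_mat (d^n) (d^n)"
    and "\<And>p. p \<in> entries (d^n) \<Longrightarrow> Y $$ p = (\<Sum>j<m. c j * K j $$ p)"
  shows "pauli_coeff d n Y a = (\<Sum>j<m. c j * pauli_coeff d n (K j) a)"
proof -
  let ?\<phi> = "\<lambda>p. \<Prod>j<n. pauli1_entry d (a j) (qdigit d (snd p) j) (qdigit d (fst p) j)"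
  have "pauli_coeff d n Y a = (\<Sum>p\<in>entries (d^n). \<Sum>j<m. c j * (K j $$ p * ?\<phi> p))"
    unfolding pauli_coeff_eq[OF assms(1)] using assms(3)
    by (intro sum.cong refl) (simp add: sum_distrib_right mult.assoc)
  also have "\<dots> = (\<Sum>j<m. c j * (\<Sum>p\<in>entries (d^n). K j $$ p * ?\<phi> p))"
    by (subst sum.swap) (simp add: sum_distrib_left)
  also have "\<dots> = (\<Sum>j<m. c j * pauli_coeff d n (K j) a)"
    using assms(2) by (simp add: pauli_coeff_eq)
  finally show ?thesis .
qed

lemma influence_form_linear:
  assumes "Y \<in> carrier_mat (d^n) (d^n)" "\<And>j. j < m \<Longrightarrow> K j \<in> carrier_mat (d^n) (d^n)"
    and "\<And>p. p \<in> entries (d^n) \<Longrightarrow> Y $$ p = (\<Sum>j<m. c j * K j $$ p)"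
  shows "influence_form d n i X Y = (\<Sum>j<m. c j * influence_form d n i X (K j))"
proof -
  have "influence_form d n i X Y =
      (\<Sum>a\<in>{a \<in> Vn d n. a i \<noteq> (0,0)}. \<Sum>j<m. c j * (cnj (pauli_coeff d n X a) * pauli_coeff d n (K j) a))"
    unfolding influence_form_def
    by (intro sum.cong refl) (simp add: pauli_coeff_linear[OF assms] sum_distrib_left mult_ac)
  also have "\<dots> = (\<Sum>j<m. c j * influence_form d n i X (K j))"
    unfolding influence_form_def by (subst sum.swap) (simp add: sum_distrib_left)
  finally show ?thesis .
qed

section \<open>Heisenberg evolution along a control path\<close>

definition hamiltonian ::
  "nat \<Rightarrow> nat \<Rightarrow> (nat \<Rightarrow> complex mat) \<Rightarrow> (nat \<Rightarrow> real \<Rightarrow> real) \<Rightarrow> real \<Rightarrow> complex mat" where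
  "hamiltonian N m h r s = mat N N (\<lambda>(k,l). \<Sum>j<m. complex_of_real (r j s) * h j $$ (k,l))"

lemma hamiltonian_carrier [simp]: "hamiltonian N m h r s \<in> carrier_mat N N"
  unfolding hamiltonian_def by simp

lemma hermitian_hamiltonian:
  assumes "\<And>j. j < m \<Longrightarrow> h j \<in> carrier_mat N N" "\<And>j. j < m \<Longrightarrow> hermitian_op (h j)"
  shows "hermitian_op (hamiltonian N m h r s)"
proof -
  have herm: "cnj (h j $$ (l,k)) = h j $$ (k,l)" if "j < m" "k < N" "l < N" for j k l
    using hermitian_op_index[OF assms(2)[OF that(1)]] assms(1)[OF that(1)] that by simp
  show ?thesis
    unfolding hermitian_op_def hamiltonian_def by (rule eq_matI) (auto simp: herm intro!: sum.cong)
qed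

lemma icomm_index:
  "h \<in> carrier_mat N N \<Longrightarrow> Q \<in> carrier_mat N N \<Longrightarrow> k < N \<Longrightarrow> l < N \<Longrightarrow>
    icomm h Q $$ (k,l) = - \<i> * ((h * Q) $$ (k,l) - (Q * h) $$ (k,l))"
  unfolding icomm_def by simp

lemma index_hamiltonian_mult:
  assumes "\<And>j. j < m \<Longrightarrow> h j \<in> carrier_mat N N" "Q \<in> carrier_mat N N" "k < N" "l < N"
  shows "(hamiltonian N m h r s * Q) $$ (k,l) = (\<Sum>j<m. complex_of_real (r j s) * (h j * Q) $$ (k,l))"
proof -
  have "(hamiltonian N m h r s * Q) $$ (k,l) =
      (\<Sum>q<N. \<Sum>j<m. complex_of_real (r j s) * h j $$ (k,q) * Q $$ (q,l))"
    unfolding index_mult_mat_sum[OF hamiltonian_carrier assms(2-4)] using assms(3)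
    by (simp add: hamiltonian_def sum_distrib_right)
  also have "\<dots> = (\<Sum>j<m. complex_of_real (r j s) * (h j * Q) $$ (k,l))"
    by (subst sum.swap) (intro sum.cong refl,
        simp add: index_mult_mat_sum[OF assms] sum_distrib_left mult.assoc del: index_mult_mat)
  finally show ?thesis .
qed

lemma index_mult_hamiltonian:
  assumes "\<And>j. j < m \<Longrightarrow> h j \<in> carrier_mat N N" "Q \<in> carrier_mat N N" "k < N" "l < N"
  shows "(Q * hamiltonian N m h r s) $$ (k,l) = (\<Sum>j<m. complex_of_real (r j s) * (Q * h j) $$ (k,l))"
proof -
  have "(Q * hamiltonian N m h r s) $$ (k,l) =
      (\<Sum>q<N. \<Sum>j<m. complex_of_real (r j s) * (Q $$ (k,q) * h j $$ (q,l)))"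
    unfolding index_mult_mat_sum[OF assms(2) hamiltonian_carrier assms(3,4)] using assms(4)
    by (simp add: hamiltonian_def sum_distrib_left mult_ac)
  also have "\<dots> = (\<Sum>j<m. complex_of_real (r j s) * (Q * h j) $$ (k,l))"
    by (subst sum.swap) (intro sum.cong refl,
        simp add: index_mult_mat_sum[OF assms(2,1) assms(3,4)] sum_distrib_left del: index_mult_mat)
  finally show ?thesis .
qed

lemma icomm_hamiltonian_index:
  assumes "\<And>j. j < m \<Longrightarrow> h j \<in> carrier_mat N N" "Q \<in> carrier_mat N N" "p \<in> entries N"
  shows "icomm (hamiltonian N m h r s) Q $$ p = (\<Sum>j<m. complex_of_real (r j s) * icomm (h j) Q $$ p)"
proof -
  obtain k l where p: "p = (k,l)" "k < N" "l < N"
    using assms(3) by auto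
  have "(\<Sum>j<m. complex_of_real (r j s) * icomm (h j) Q $$ (k,l)) =
      (\<Sum>j<m. - \<i> * (complex_of_real (r j s) * (h j * Q) $$ (k,l) - complex_of_real (r j s) * (Q * h j) $$ (k,l)))"
    by (intro sum.cong refl) (simp add: icomm_index[OF assms(1,2) p(2,3)] algebra_simps)
  then show ?thesis
    unfolding p(1) icomm_index[OF hamiltonian_carrier assms(2) p(2,3)]
    by (simp only: index_hamiltonian_mult[OF assms(1,2) p(2,3)] index_mult_hamiltonian[OF assms(1,2) p(2,3)]
        sum_distrib_left[symmetric] sum_subtractf)
qed

lemma conj_deriv_eq_icomm:
  assumes "hermitian_op H" "H \<in> carrier_mat N N" "W \<in> carrier_mat N N" "A \<in> carrier_mat N N"
  shows "W * A * adj ((- \<i>) \<cdot>\<^sub>m (H * W)) + (- \<i>) \<cdot>\<^sub>m (H * W) * A * adj W = icomm H (W * A * adj W)"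
proof -
  have "W * A * adj ((- \<i>) \<cdot>\<^sub>m (H * W)) = W * A * (\<i> \<cdot>\<^sub>m (adj W * H))"
    using assms(1) by (simp add: adj_smult adj_mult[OF assms(2,3)] hermitian_op_def)
  also have "\<dots> = \<i> \<cdot>\<^sub>m (W * A * (adj W * H))"
    using assms(2-4) by (intro mult_smult_distrib) auto
  also have "W * A * (adj W * H) = W * A * adj W * H"
    using assms(2-4) by (intro assoc_mult_mat[symmetric]) auto
  finally have left: "W * A * adj ((- \<i>) \<cdot>\<^sub>m (H * W)) = \<i> \<cdot>\<^sub>m (W * A * adj W * H)" .
  have "(- \<i>) \<cdot>\<^sub>m (H * W) * A * adj W = (- \<i>) \<cdot>\<^sub>m (H * W * A) * adj W"
    using assms(2-4) by (simp add: mult_smult_assoc_mat[of "H * W" N N])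
  also have "\<dots> = (- \<i>) \<cdot>\<^sub>m (H * W * A * adj W)"
    using assms(2-4) by (intro mult_smult_assoc_mat) auto
  also have "H * W * A * adj W = H * (W * A * adj W)"
    using assms(2-4) by (simp add: assoc_mult_mat[of H N N "W * A" N "adj W" N])
  finally have right: "(- \<i>) \<cdot>\<^sub>m (H * W) * A * adj W = (- \<i>) \<cdot>\<^sub>m (H * (W * A * adj W))" .
  show ?thesis
    unfolding left right icomm_def using assms(2-4) by (rule_tac eq_matI) (auto simp: algebra_simps)
qed

lemma conj_index:
  assumes "X \<in> carrier_mat N N" "A \<in> carrier_mat N N" "Y \<in> carrier_mat N N" "k < N" "l < N"
  shows "(X * A * adj Y) $$ (k,l) = (\<Sum>q<N. (\<Sum>p<N. X $$ (k,p) * A $$ (p,q)) * cnj (Y $$ (l,q)))"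
proof -
  have "X * A \<in> carrier_mat N N"
    using assms(1,2) by simp
  then show ?thesis
    using assms by (simp add: index_mult_mat_sum[of "X * A" N N "adj Y" N] index_mult_mat_sum[OF assms(1,2)]
        del: index_mult_mat)
qed

lemma has_vector_derivative_conj_index:
  assumes "s \<in> S" "\<And>t. t \<in> S \<Longrightarrow> W t \<in> carrier_mat N N" "W' \<in> carrier_mat N N" "A \<in> carrier_mat N N"
    and W': "\<And>k l. k < N \<Longrightarrow> l < N \<Longrightarrow> ((\<lambda>t. W t $$ (k,l)) has_vector_derivative W' $$ (k,l)) (at s within S)"
    and "k < N" "l < N"
  shows "((\<lambda>t. (W t * A * adj (W t)) $$ (k,l)) has_vector_derivative
    (W s * A * adj W' + W' * A * adj (W s)) $$ (k,l)) (at s within S)"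
proof -
  have Ws: "W s \<in> carrier_mat N N"
    using assms(1,2) by blast
  have "((\<lambda>t. \<Sum>q<N. (\<Sum>p<N. W t $$ (k,p) * A $$ (p,q)) * cnj (W t $$ (l,q))) has_vector_derivative
      (\<Sum>q<N. (\<Sum>p<N. W s $$ (k,p) * A $$ (p,q)) * cnj (W' $$ (l,q)) +
               (\<Sum>p<N. W' $$ (k,p) * A $$ (p,q)) * cnj (W s $$ (l,q)))) (at s within S)"
    using assms(6,7)
    by (intro has_vector_derivative_sum has_vector_derivative_mult has_vector_derivative_mult_left
        has_vector_derivative_cnj W') auto
  moreover have "(\<Sum>q<N. (\<Sum>p<N. W s $$ (k,p) * A $$ (p,q)) * cnj (W' $$ (l,q)) +
               (\<Sum>p<N. W' $$ (k,p) * A $$ (p,q)) * cnj (W s $$ (l,q))) =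
      (W s * A * adj W' + W' * A * adj (W s)) $$ (k,l)"
    using assms(3,4,6,7) Ws
    by (simp add: conj_index[OF Ws assms(4,3) assms(6,7)] conj_index[OF assms(3,4) Ws assms(6,7)] sum.distrib)
  ultimately have "((\<lambda>t. \<Sum>q<N. (\<Sum>p<N. W t $$ (k,p) * A $$ (p,q)) * cnj (W t $$ (l,q))) has_vector_derivative
      (W s * A * adj W' + W' * A * adj (W s)) $$ (k,l)) (at s within S)"
    by simp
  then show ?thesis
    by (rule has_vector_derivative_transform[OF assms(1), rotated])
      (use assms(2,4,6,7) in \<open>simp add: conj_index\<close>)
qed

lemma has_vector_derivative_conj_index_icomm:
  assumes "s \<in> S" "\<And>t. t \<in> S \<Longrightarrow> W t \<in> carrier_mat N N"
    and "hermitian_op H" "H \<in> carrier_mat N N" "A \<in> carrier_mat N N"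
    and "\<And>k l. k < N \<Longrightarrow> l < N \<Longrightarrow>
      ((\<lambda>t. W t $$ (k,l)) has_vector_derivative (- \<i> * (H * W s) $$ (k,l))) (at s within S)"
    and "k < N" "l < N"
  shows "((\<lambda>t. (W t * A * adj (W t)) $$ (k,l)) has_vector_derivative
    icomm H (W s * A * adj (W s)) $$ (k,l)) (at s within S)"
proof -
  have Ws: "W s \<in> carrier_mat N N"
    using assms(1,2) by blast
  have "((\<lambda>t. W t $$ (k,l)) has_vector_derivative ((- \<i>) \<cdot>\<^sub>m (H * W s)) $$ (k,l)) (at s within S)"
    if "k < N" "l < N" for k l
    using assms(4,6) Ws that by simp
  from has_vector_derivative_conj_index[OF assms(1,2) _ assms(5) this assms(7,8)]
  show ?thesis
    using assms(3,4,5) Ws by (simp add: conj_deriv_eq_icomm)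
qed

lemma has_vector_derivative_pauli_coeff:
  assumes "s \<in> S" "\<And>t. t \<in> S \<Longrightarrow> Q t \<in> carrier_mat (d^n) (d^n)" "Q' \<in> carrier_mat (d^n) (d^n)"
    and "\<And>p. p \<in> entries (d^n) \<Longrightarrow> ((\<lambda>t. Q t $$ p) has_vector_derivative Q' $$ p) (at s within S)"
  shows "((\<lambda>t. pauli_coeff d n (Q t) a) has_vector_derivative pauli_coeff d n Q' a) (at s within S)"
proof -
  let ?\<phi> = "\<lambda>p. \<Prod>j<n. pauli1_entry d (a j) (qdigit d (snd p) j) (qdigit d (fst p) j)"
  have "((\<lambda>t. \<Sum>p\<in>entries (d^n). Q t $$ p * ?\<phi> p) has_vector_derivative
      (\<Sum>p\<in>entries (d^n). Q' $$ p * ?\<phi> p)) (at s within S)"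
    by (intro has_vector_derivative_sum has_vector_derivative_mult_left assms(4))
  then show ?thesis
    unfolding pauli_coeff_eq[OF assms(3)]
    by (rule has_vector_derivative_transform[OF assms(1), rotated]) (simp add: pauli_coeff_eq assms(2))
qed

lemma has_vector_derivative_influence_form:
  assumes "s \<in> S" "\<And>t. t \<in> S \<Longrightarrow> Q t \<in> carrier_mat (d^n) (d^n)" "Q' \<in> carrier_mat (d^n) (d^n)"
    and "\<And>p. p \<in> entries (d^n) \<Longrightarrow> ((\<lambda>t. Q t $$ p) has_vector_derivative Q' $$ p) (at s within S)"
  shows "((\<lambda>t. influence_form d n i (Q t) (Q t)) has_vector_derivative
    (influence_form d n i (Q s) Q' + influence_form d n i Q' (Q s))) (at s within S)"
proof -
  have "((\<lambda>t. influence_form d n i (Q t) (Q t)) has_vector_derivative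
      (\<Sum>a\<in>{a \<in> Vn d n. a i \<noteq> (0,0)}. cnj (pauli_coeff d n (Q s) a) * pauli_coeff d n Q' a +
         cnj (pauli_coeff d n Q' a) * pauli_coeff d n (Q s) a)) (at s within S)"
    unfolding influence_form_def
    by (intro has_vector_derivative_sum has_vector_derivative_mult has_vector_derivative_cnj
        has_vector_derivative_pauli_coeff[OF assms])
  then show ?thesis
    by (simp add: influence_form_def sum.distrib)
qed

lemma has_vector_derivative_frob_inner_self:
  assumes "\<And>p. p \<in> entries N \<Longrightarrow> ((\<lambda>t. Q t $$ p) has_vector_derivative Q' $$ p) (at s within S)"
  shows "((\<lambda>t. frob_inner N (Q t) (Q t)) has_vector_derivative
    (frob_inner N (Q s) Q' + frob_inner N Q' (Q s))) (at s within S)"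
proof -
  have "((\<lambda>t. frob_inner N (Q t) (Q t)) has_vector_derivative
      (\<Sum>p\<in>entries N. cnj (Q s $$ p) * Q' $$ p + cnj (Q' $$ p) * Q s $$ p)) (at s within S)"
    unfolding frob_inner_def
    by (intro has_vector_derivative_sum has_vector_derivative_mult has_vector_derivative_cnj assms)
  then show ?thesis
    by (simp add: frob_inner_def sum.distrib)
qed

lemma frob_norm_constant:
  assumes "convex S"
    and "\<And>s p. s \<in> S \<Longrightarrow> p \<in> entries N \<Longrightarrow> ((\<lambda>t. Q t $$ p) has_vector_derivative Q' s $$ p) (at s within S)"
    and "\<And>s. s \<in> S \<Longrightarrow> Re (frob_inner N (Q s) (Q' s)) = 0"
    and "t \<in> S" "t' \<in> S"
  shows "frob_norm N (Q t) = frob_norm N (Q t')"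
proof -
  have "((\<lambda>t. frob_inner N (Q t) (Q t)) has_derivative (\<lambda>_. 0)) (at s within S)" if "s \<in> S" for s
  proof -
    have "((\<lambda>t. frob_inner N (Q t) (Q t)) has_vector_derivative
        (frob_inner N (Q s) (Q' s) + frob_inner N (Q' s) (Q s))) (at s within S)"
      by (rule has_vector_derivative_frob_inner_self) (rule assms(2)[OF that])
    moreover have "frob_inner N (Q s) (Q' s) + frob_inner N (Q' s) (Q s) = 0"
      using assms(3)[OF that] by (simp add: frob_inner_commute[of N "Q' s"] complex_add_cnj)
    ultimately show ?thesis
      by (simp add: has_vector_derivative_def)
  qed
  then obtain c where "\<forall>t\<in>S. frob_inner N (Q t) (Q t) = c"
    using has_derivative_zero_constant[OF assms(1)] by blast
  then have "(frob_norm N (Q t))\<^sup>2 = (frob_norm N (Q t'))\<^sup>2"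
    using assms(4,5) frob_inner_self[of N] of_real_eq_iff by metis
  then show ?thesis
    using frob_norm_nonneg power2_eq_imp_eq by blast
qed

section \<open>Circuit sensitivity versus circuit cost\<close>

lemma norm_diff_le_integral_derivative_bound:
  fixes G :: "real \<Rightarrow> 'a::banach"
  assumes "a \<le> b" "\<And>s. s \<in> {a..b} \<Longrightarrow> (G has_vector_derivative G' s) (at s within {a..b})"
    and "\<And>s. s \<in> {a..b} \<Longrightarrow> norm (G' s) \<le> B s" "B integrable_on {a..b}"
  shows "norm (G b - G a) \<le> integral {a..b} B"
proof -
  have "(G' has_integral (G b - G a)) {a..b}"
    using assms(1,2) by (rule fundamental_theorem_of_calculus)
  then show ?thesis
    using integral_norm_bound_integral[OF has_integral_integrable assms(4,3)] integral_unique by metis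
qed

lemma norm_sum_influence_form_icomm_le:
  fixes r :: "nat \<Rightarrow> real \<Rightarrow> real" and s :: real
  assumes "0 < d" "\<And>j. j < m \<Longrightarrow> h j \<in> carrier_mat (d^n) (d^n)" "\<And>j. j < m \<Longrightarrow> hermitian_op (h j)"
    and "\<And>j. j < m \<Longrightarrow> two_qudit_supported d n (h j)" "Q \<in> carrier_mat (d^n) (d^n)"
  defines "K \<equiv> icomm (hamiltonian (d^n) m h r s) Q"
  shows "cmod (\<Sum>i<n. influence_form d n i Q K + influence_form d n i K Q) \<le>
    8 * real (d^n) * (frob_norm (d^n) Q)\<^sup>2 * (\<Sum>j<m. \<bar>r j s\<bar> * op_norm (h j))"
proof -
  let ?R = "\<lambda>i j. Re (influence_form d n i Q (icomm (h j) Q))"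
  have Re_site: "Re (influence_form d n i Q K) = (\<Sum>j<m. r j s * ?R i j)" for i
  proof -
    have "influence_form d n i Q K = (\<Sum>j<m. complex_of_real (r j s) * influence_form d n i Q (icomm (h j) Q))"
      unfolding K_def using assms(2,5)
      by (intro influence_form_linear icomm_hamiltonian_index) (auto simp: K_def)
    then show ?thesis
      by simp
  qed
  have "cmod (\<Sum>i<n. influence_form d n i Q K + influence_form d n i K Q) =
      \<bar>\<Sum>i<n. 2 * (\<Sum>j<m. r j s * ?R i j)\<bar>"
    by (simp add: influence_form_commute[of d n i K Q for i] complex_add_cnj Re_site
        flip: of_real_sum sum_distrib_left)
  also have "\<dots> \<le> 2 * (\<Sum>j<m. \<bar>r j s\<bar> * (\<Sum>i<n. \<bar>?R i j\<bar>))"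
  proof -
    have "\<bar>\<Sum>i<n. 2 * (\<Sum>j<m. r j s * ?R i j)\<bar> \<le> (\<Sum>i<n. 2 * (\<Sum>j<m. \<bar>r j s\<bar> * \<bar>?R i j\<bar>))"
      by (rule order_trans[OF sum_abs]) (auto intro!: sum_mono order_trans[OF sum_abs] simp: abs_mult)
    also have "\<dots> = 2 * (\<Sum>j<m. \<bar>r j s\<bar> * (\<Sum>i<n. \<bar>?R i j\<bar>))"
      by (simp add: sum_distrib_left sum.swap[of _ "{..<n}"])
    finally show ?thesis .
  qed
  also have "\<dots> \<le> 2 * (\<Sum>j<m. \<bar>r j s\<bar> * (4 * real (d^n) * op_norm (h j) * (frob_norm (d^n) Q)\<^sup>2))"
    using assms by (intro mult_left_mono sum_mono sum_abs_Re_influence_form_icomm_le) auto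
  also have "\<dots> = 8 * real (d^n) * (frob_norm (d^n) Q)\<^sup>2 * (\<Sum>j<m. \<bar>r j s\<bar> * op_norm (h j))"
    by (simp add: sum_distrib_left mult_ac)
  finally show ?thesis .
qed

lemma influence_change_le_integral:
  fixes r :: "nat \<Rightarrow> real \<Rightarrow> real"
  assumes "0 < d" "\<And>j. j < m \<Longrightarrow> h j \<in> carrier_mat (d^n) (d^n)" "\<And>j. j < m \<Longrightarrow> hermitian_op (h j)"
    and "\<And>j. j < m \<Longrightarrow> two_qudit_supported d n (h j)" "\<And>j. j < m \<Longrightarrow> op_norm (h j) = 1"
    and "\<And>j. j < m \<Longrightarrow> continuous_on {0..1} (r j)"
    and Q: "\<And>t. t \<in> {0..1} \<Longrightarrow> Q t \<in> carrier_mat (d^n) (d^n)"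
    and Q': "\<And>s p. s \<in> {0..1} \<Longrightarrow> p \<in> entries (d^n) \<Longrightarrow>
      ((\<lambda>t. Q t $$ p) has_vector_derivative icomm (hamiltonian (d^n) m h r s) (Q s) $$ p) (at s within {0..1})"
    and frob: "\<And>s. s \<in> {0..1} \<Longrightarrow> (frob_norm (d^n) (Q s))\<^sup>2 = real (d^n)"
  shows "\<bar>influence d n (Q 1) - influence d n (Q 0)\<bar> \<le> 8 * integral {0..1} (\<lambda>s. \<Sum>j<m. \<bar>r j s\<bar>)"
proof -
  let ?N = "real (d^n)"
  let ?K = "\<lambda>s. icomm (hamiltonian (d^n) m h r s) (Q s)"
  define G where "G t = (\<Sum>i<n. influence_form d n i (Q t) (Q t))" for t
  define G' where "G' s = (\<Sum>i<n. influence_form d n i (Q s) (?K s) + influence_form d n i (?K s) (Q s))" for s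
  have deriv: "(G has_vector_derivative G' s) (at s within {0..1})" if "s \<in> {0..1}" for s
    unfolding G_def G'_def using that Q
    by (intro has_vector_derivative_sum has_vector_derivative_influence_form Q') auto
  have bound: "norm (G' s) \<le> 8 * ?N\<^sup>2 * (\<Sum>j<m. \<bar>r j s\<bar>)" if "s \<in> {0..1}" for s
  proof -
    have "norm (\<Sum>i<n. influence_form d n i (Q s) (?K s) + influence_form d n i (?K s) (Q s)) \<le>
        8 * ?N * (frob_norm (d^n) (Q s))\<^sup>2 * (\<Sum>j<m. \<bar>r j s\<bar> * op_norm (h j))"
      by (rule norm_sum_influence_form_icomm_le) (use assms(1-4) Q[OF that] in auto)
    also have "(\<Sum>j<m. \<bar>r j s\<bar> * op_norm (h j)) = (\<Sum>j<m. \<bar>r j s\<bar>)"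
      using assms(5) by simp
    finally show ?thesis
      unfolding frob[OF that] G'_def by (simp add: power2_eq_square)
  qed
  have "norm (G 1 - G 0) \<le> integral {0..1} (\<lambda>s. 8 * ?N\<^sup>2 * (\<Sum>j<m. \<bar>r j s\<bar>))"
    using assms(6) deriv bound
    by (intro norm_diff_le_integral_derivative_bound[where G' = G'] integrable_continuous_interval
        continuous_intros) auto
  also have "\<dots> = 8 * ?N\<^sup>2 * integral {0..1} (\<lambda>s. \<Sum>j<m. \<bar>r j s\<bar>)"
    by simp
  finally have "norm (G 1 - G 0) / ?N\<^sup>2 \<le> 8 * integral {0..1} (\<lambda>s. \<Sum>j<m. \<bar>r j s\<bar>)"
    using assms(1) by (simp add: divide_le_eq mult_ac)
  moreover have "\<bar>influence d n (Q 1) - influence d n (Q 0)\<bar> \<le> norm (G 1 - G 0) / ?N\<^sup>2"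
    unfolding influence_eq_sum_influence_form G_def[symmetric]
    using abs_Re_le_cmod[of "G 1 - G 0"] by (simp add: diff_divide_distrib[symmetric] divide_right_mono)
  ultimately show ?thesis
    by linarith
qed

lemma influence_conjugation_change_le:
  fixes r :: "nat \<Rightarrow> real \<Rightarrow> real"
  assumes "0 < d" "\<And>j. j < m \<Longrightarrow> h j \<in> carrier_mat (d^n) (d^n)" "\<And>j. j < m \<Longrightarrow> hermitian_op (h j)"
    and "\<And>j. j < m \<Longrightarrow> two_qudit_supported d n (h j)" "\<And>j. j < m \<Longrightarrow> op_norm (h j) = 1"
    and "\<And>j. j < m \<Longrightarrow> continuous_on {0..1} (r j)"
    and "path_ordered_exp (d^n) (hamiltonian (d^n) m h r) U"
    and A: "A \<in> carrier_mat (d^n) (d^n)" "hs_norm d n A = 1"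
  shows "\<bar>influence d n (U * A * adj U) - influence d n A\<bar> \<le> 8 * integral {0..1} (\<lambda>s. \<Sum>j<m. \<bar>r j s\<bar>)"
proof -
  let ?H = "hamiltonian (d^n) m h r"
  obtain W where W: "\<And>s. s \<in> {0..1} \<Longrightarrow> W s \<in> carrier_mat (d^n) (d^n)" and "W 0 = 1\<^sub>m (d^n)" "W 1 = U"
    and W': "\<And>s k l. s \<in> {0..1} \<Longrightarrow> k < d^n \<Longrightarrow> l < d^n \<Longrightarrow>
      ((\<lambda>t. W t $$ (k,l)) has_vector_derivative (- \<i> * (?H s * W s) $$ (k,l))) (at s within {0..1})"
    using assms(7) unfolding path_ordered_exp_def by blast
  define Q where "Q t = W t * A * adj (W t)" for t
  have Q_ends: "Q 0 = A" "Q 1 = U * A * adj U"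
    using A(1) \<open>W 0 = 1\<^sub>m (d^n)\<close> \<open>W 1 = U\<close> by (simp_all add: Q_def)
  have Q: "Q t \<in> carrier_mat (d^n) (d^n)" if "t \<in> {0..1}" for t
    using W[OF that] A(1) unfolding Q_def by (metis adj_carrier mult_carrier_mat)
  have herm: "hermitian_op (?H s)" for s
    using assms(2,3) by (rule hermitian_hamiltonian)
  have Q': "((\<lambda>t. Q t $$ p) has_vector_derivative icomm (?H s) (Q s) $$ p) (at s within {0..1})"
    if "s \<in> {0..1}" "p \<in> entries (d^n)" for s p
    using that herm A(1) W W' unfolding Q_def
    by (cases p) (auto intro!: has_vector_derivative_conj_index_icomm)
  have "frob_norm (d^n) (Q s) = frob_norm (d^n) (Q 0)" if "s \<in> {0..1}" for s
    using that herm Q by (intro frob_norm_constant[OF convex_real_interval(5) Q']) (auto intro: Re_frob_inner_icomm)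
  moreover have "frob_norm (d^n) A = sqrt (real (d^n))"
    using A assms(1) by (simp add: hs_norm_eq_frob_norm)
  ultimately have "(frob_norm (d^n) (Q s))\<^sup>2 = real (d^n)" if "s \<in> {0..1}" for s
    using that by (simp add: Q_ends)
  from influence_change_le_integral[OF assms(1-6) Q Q' this]
  show ?thesis
    unfolding Q_ends .
qed

lemma circuit_sensitivity_le_integral:
  fixes r :: "nat \<Rightarrow> real \<Rightarrow> real"
  assumes "0 < d" "\<And>j. j < m \<Longrightarrow> h j \<in> carrier_mat (d^n) (d^n)" "\<And>j. j < m \<Longrightarrow> hermitian_op (h j)"
    and "\<And>j. j < m \<Longrightarrow> two_qudit_supported d n (h j)" "\<And>j. j < m \<Longrightarrow> op_norm (h j) = 1"
    and "\<And>j. j < m \<Longrightarrow> continuous_on {0..1} (r j)"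
    and "path_ordered_exp (d^n) (hamiltonian (d^n) m h r) U"
  shows "circuit_sensitivity d n U \<le> 8 * integral {0..1} (\<lambda>s. \<Sum>j<m. \<bar>r j s\<bar>)"
  unfolding circuit_sensitivity_def
proof (rule cSup_least)
  show "{\<bar>influence d n (U * A * adj U) - influence d n A\<bar> | A.
      A \<in> carrier_mat (d^n) (d^n) \<and> hs_norm d n A = 1} \<noteq> {}"
  proof -
    have "1\<^sub>m (d^n) \<in> carrier_mat (d^n) (d^n) \<and> hs_norm d n (1\<^sub>m (d^n)) = 1"
      using hs_norm_one[OF assms(1)] by simp
    then show ?thesis
      by blast
  qed
next
  fix x assume "x \<in> {\<bar>influence d n (U * A * adj U) - influence d n A\<bar> | A.
      A \<in> carrier_mat (d^n) (d^n) \<and> hs_norm d n A = 1}"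
  then obtain A where "x = \<bar>influence d n (U * A * adj U) - influence d n A\<bar>"
    and "A \<in> carrier_mat (d^n) (d^n)" "hs_norm d n A = 1"
    by blast
  then show "x \<le> 8 * integral {0..1} (\<lambda>s. \<Sum>j<m. \<bar>r j s\<bar>)"
    using influence_conjugation_change_le[where h = h, OF assms] by simp
qed

theorem mainTheorem1:
  fixes d n m :: nat and h :: "nat \<Rightarrow> complex mat" and U :: "complex mat"
  assumes "d \<ge> 2" and "n \<ge> 1"
    and "\<And>j. j < m \<Longrightarrow> h j \<in> carrier_mat (d^n) (d^n)"
    and "\<And>j. j < m \<Longrightarrow> hermitian_op (h j)"
    and "\<And>j. j < m \<Longrightarrow> mtrace (h j) = 0"
    and "\<And>j. j < m \<Longrightarrow> two_qudit_supported d n (h j)"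
    and "\<And>j. j < m \<Longrightarrow> op_norm (h j) = 1"
    and "U \<in> SU (d^n)"
  shows "circuit_cost (d^n) m h U \<ge> ereal (circuit_sensitivity d n U / 8)"
  unfolding circuit_cost_def
proof (rule Inf_greatest)
  fix x assume "x \<in> ereal ` {integral {0..1} (\<lambda>s. \<Sum>j<m. \<bar>r j s\<bar>) | r :: nat \<Rightarrow> real \<Rightarrow> real.
    (\<forall>j<m. continuous_on {0..1} (r j)) \<and>
    path_ordered_exp (d^n) (\<lambda>s. mat (d^n) (d^n) (\<lambda>(k,l). \<Sum>j<m. complex_of_real (r j s) * h j $$ (k,l))) U}"
  then obtain r :: "nat \<Rightarrow> real \<Rightarrow> real" where x: "x = ereal (integral {0..1} (\<lambda>s. \<Sum>j<m. \<bar>r j s\<bar>))"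
    and r: "\<forall>j<m. continuous_on {0..1} (r j)"
    and U: "path_ordered_exp (d^n) (\<lambda>s. mat (d^n) (d^n) (\<lambda>(k,l). \<Sum>j<m. complex_of_real (r j s) * h j $$ (k,l))) U"
    by blast
  have "hamiltonian (d^n) m h r =
      (\<lambda>s. mat (d^n) (d^n) (\<lambda>(k,l). \<Sum>j<m. complex_of_real (r j s) * h j $$ (k,l)))"
    by (rule ext) (simp only: hamiltonian_def)
  then have "circuit_sensitivity d n U \<le> 8 * integral {0..1} (\<lambda>s. \<Sum>j<m. \<bar>r j s\<bar>)"
    using assms(1) r U by (intro circuit_sensitivity_le_integral[where h = h] assms(3,4,6,7)) simp_all
  then show "ereal (circuit_sensitivity d n U / 8) \<le> x"
    unfolding x by simp
qed

end
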